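(* Let $E$ be a directed graph and let $(H,S)$ be a reflexive admissible pair of $E$. Then $E$ is all-reflexive if and only if the quotient graph $E/(H,S)$ and the porcupine graph $P_{(H,S)}$ are both all-reflexive. The statement continues to hold if "all-reflexive" is replaced everywhere by "strongly all-reflexive".
   Context: $E$ is an arbitrary directed graph with vertex set $E^0$, edge set $E^1$, source map $\mathbf{s}$ and range map $\mathbf{r}$. For a set of vertices $V$, the root of $V$ is $R(V)=\{u\in E^0\mid u\geq v \text{ for some } v\in V\}$, where $u\geq v$ means there is a path from $u$ to $v$. A set $H\subseteq E^0$ is hereditary if the range of every path with source in $H$ is in $H$, and saturated if every regular vertex (neither a sink nor an infinite emitter) $v$ with $\mathbf{r}(\mathbf{s}^{-1}(v))\subseteq H$ lies in $H$. For $H$ hereditary and saturated, the set of breaking vertices is $B_H=\{v\in E^0-H\mid v$ is an infinite emitter and $\mathbf{s}^{-1}(v)\cap\mathbf{r}^{-1}(E^0-H)$ is nonempty and finite$\}$. An admissible pair is $(H,S)$ with $H$ hereditary and saturated and $S\subseteq B_H$. Define $H^\bot=E^0-R(H)$ and $S^\bot=B_{H^\bot}-S$; then $(H^\bot,S^\bot)$ is an admissible pair, and $(H,S)$ is called reflexive if $(H,S)=(H^{\bot\bot},S^{\bot\bot})$ (equivalently, $R(H)-H\subseteq R(H^\bot)$ and $S=B_H$). The quotient graph $E/(H,S)$ has vertices $(E^0-H)\cup\{v'\mid v\in B_H-S\}$ and edges $\{e\in E^1\mid \mathbf{r}(e)\notin H\}\cup\{e'\mid e\in E^1,\ \mathbf{r}(e)\in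 B_H-S\}$, with $\mathbf{s},\mathbf{r}$ as in $E$ on the old edges and $\mathbf{s}(e')=\mathbf{s}(e)$, $\mathbf{r}(e')=\mathbf{r}(e)'$. The porcupine graph $P_{(H,S)}$: let $F_1(H,S)$ be the set of paths $e_1\ldots e_n$ of $E$ with $\mathbf{r}(e_n)\in H$ and $\mathbf{s}(e_n)\notin H\cup S$, and $F_2(H,S)$ the set of paths $p$ of positive length with $\mathbf{r}(p)\in S$. For each edge $e\in F_1(H,S)\cup F_2(H,S)$ add a new vertex $w^e$ and a new edge $f^e$ with $\mathbf{s}(f^e)=w^e$, $\mathbf{r}(f^e)=\mathbf{r}(e)$; inductively, for each path $p=eq$ in $F_1(H,S)\cup F_2(H,S)$ with $|q|\geq 1$ add a new vertex $w^p$ and a new edge $f^p$ with $\mathbf{s}(f^p)=w^p$, $\mathbf{r}(f^p)=w^q$. The vertices of $P_{(H,S)}$ are $H\cup S\cup\{w^p\mid p\in F_1(H,S)\cup F_2(H,S)\}$, and its edges are $\{e\in E^1\mid \mathbf{s}(e)\in H\}\cup\{e\in E^1\mid \mathbf{s}(e)\in S,\ \mathbf{r}(e)\in H\}\cup\{f^p\mid p\in F_1(H,S)\cup F_2(H,S)\}$, with $\mathbf{s},\mathbf{r}$ as in $E$ on common edges. A cycle is a closed path whose distinct edges have distinct sources; an exit of a cycle is an edge not on the cycle whose source is on the cycle. A cycle $c$ is extreme if it has exits and for every path $p$ with $\mathbf{s}(p)$ on $c$ there is a path $q$ from $\mathbf{r}(p)$ to a vertex of $c$. A graph is all-reflexive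 if (a) each cycle is either without exits or extreme, (b) each infinite emitter lies on a cycle, and (c) for each infinite path $\alpha$ with vertex set $\alpha^0$, only finitely many edges $e$ with $\mathbf{s}(e)\in\alpha^0$ satisfy $\mathbf{r}(e)\notin R(\alpha^0)$. (Equivalently, every admissible pair of the graph is reflexive.) A graph is strongly all-reflexive if it is all-reflexive and has no cycles without exits. *)

theory Defs
  imports Main
begin

record ('v, 'e) dgraph =
  verts :: "'v set"
  edges :: "'e set"
  src :: "'e \<Rightarrow> 'v"
  rng :: "'e \<Rightarrow> 'v"

definition wf_dgraph :: "('v, 'e) dgraph \<Rightarrow> bool" where
  "wf_dgraph G \<longleftrightarrow> (\<forall>e \<in> edges G. src G e \<in> verts G \<and> rng G e \<in> verts G)"

definition is_path :: "('v, 'e) dgraph \<Rightarrow> 'e list \<Rightarrow> bool" where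
  "is_path G p \<longleftrightarrow> p \<noteq> [] \<and> set p \<subseteq> edges G \<and>
     (\<forall>i. Suc i < length p \<longrightarrow> rng G (p ! i) = src G (p ! Suc i))"

definition path_src :: "('v, 'e) dgraph \<Rightarrow> 'e list \<Rightarrow> 'v" where
  "path_src G p = src G (hd p)"

definition path_rng :: "('v, 'e) dgraph \<Rightarrow> 'e list \<Rightarrow> 'v" where
  "path_rng G p = rng G (last p)"

definition geq :: "('v, 'e) dgraph \<Rightarrow> 'v \<Rightarrow> 'v \<Rightarrow> bool" where
  "geq G u v \<longleftrightarrow> (u = v \<and> u \<in> verts G) \<or>
     (\<exists>p. is_path G p \<and> path_src G p = u \<and> path_rng G p = v)"

definition root :: "('v, 'e) dgraph \<Rightarrow> 'v set \<Rightarrow> 'v set" where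
  "root G V = {u \<in> verts G. \<exists>v \<in> V. geq G u v}"

definition out_edges :: "('v, 'e) dgraph \<Rightarrow> 'v \<Rightarrow> 'e set" where
  "out_edges G v = {e \<in> edges G. src G e = v}"

definition is_sink :: "('v, 'e) dgraph \<Rightarrow> 'v \<Rightarrow> bool" where
  "is_sink G v \<longleftrightarrow> out_edges G v = {}"

definition inf_emitter :: "('v, 'e) dgraph \<Rightarrow> 'v \<Rightarrow> bool" where
  "inf_emitter G v \<longleftrightarrow> infinite (out_edges G v)"

definition regular :: "('v, 'e) dgraph \<Rightarrow> 'v \<Rightarrow> bool" where
  "regular G v \<longleftrightarrow> \<not> is_sink G v \<and> \<not> inf_emitter G v"

definition hereditary :: "('v, 'e) dgraph \<Rightarrow> 'v set \<Rightarrow> bool" where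
  "hereditary G H \<longleftrightarrow> H \<subseteq> verts G \<and>
     (\<forall>p. is_path G p \<and> path_src G p \<in> H \<longrightarrow> path_rng G p \<in> H)"

definition saturated :: "('v, 'e) dgraph \<Rightarrow> 'v set \<Rightarrow> bool" where
  "saturated G H \<longleftrightarrow>
     (\<forall>v \<in> verts G. regular G v \<and> rng G ` out_edges G v \<subseteq> H \<longrightarrow> v \<in> H)"

definition breaking :: "('v, 'e) dgraph \<Rightarrow> 'v set \<Rightarrow> 'v set" where
  "breaking G H = {v \<in> verts G - H. inf_emitter G v \<and>
     {e \<in> out_edges G v. rng G e \<in> verts G - H} \<noteq> {} \<and>
     finite {e \<in> out_edges G v. rng G e \<in> verts G - H}}"

definition admissible :: "('v, 'e) dgraph \<Rightarrow> 'v set \<Rightarrow> 'v set \<Rightarrow> bool" where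
  "admissible G H S \<longleftrightarrow> hereditary G H \<and> saturated G H \<and> S \<subseteq> breaking G H"

definition perpH :: "('v, 'e) dgraph \<Rightarrow> 'v set \<Rightarrow> 'v set" where
  "perpH G H = verts G - root G H"

definition perpS :: "('v, 'e) dgraph \<Rightarrow> 'v set \<Rightarrow> 'v set \<Rightarrow> 'v set" where
  "perpS G H S = breaking G (perpH G H) - S"

definition reflexive_pair :: "('v, 'e) dgraph \<Rightarrow> 'v set \<Rightarrow> 'v set \<Rightarrow> bool" where
  "reflexive_pair G H S \<longleftrightarrow> admissible G H S \<and>
     H = perpH G (perpH G H) \<and> S = perpS G (perpH G H) (perpS G H S)"

definition is_cycle :: "('v, 'e) dgraph \<Rightarrow> 'e list \<Rightarrow> bool" where
  "is_cycle G c \<longleftrightarrow> is_path G c \<and> path_src G c = path_rng G c \<and> distinct (map (src G) c)"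

definition cycle_verts :: "('v, 'e) dgraph \<Rightarrow> 'e list \<Rightarrow> 'v set" where
  "cycle_verts G c = src G ` set c"

definition is_exit :: "('v, 'e) dgraph \<Rightarrow> 'e list \<Rightarrow> 'e \<Rightarrow> bool" where
  "is_exit G c e \<longleftrightarrow> e \<in> edges G \<and> e \<notin> set c \<and> src G e \<in> cycle_verts G c"

definition has_exit :: "('v, 'e) dgraph \<Rightarrow> 'e list \<Rightarrow> bool" where
  "has_exit G c \<longleftrightarrow> (\<exists>e. is_exit G c e)"

definition extreme_cycle :: "('v, 'e) dgraph \<Rightarrow> 'e list \<Rightarrow> bool" where
  "extreme_cycle G c \<longleftrightarrow> has_exit G c \<and>
     (\<forall>p. is_path G p \<and> path_src G p \<in> cycle_verts G c \<longrightarrow>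
        (\<exists>w \<in> cycle_verts G c. geq G (path_rng G p) w))"

definition is_inf_path :: "('v, 'e) dgraph \<Rightarrow> (nat \<Rightarrow> 'e) \<Rightarrow> bool" where
  "is_inf_path G \<alpha> \<longleftrightarrow> (\<forall>i. \<alpha> i \<in> edges G \<and> rng G (\<alpha> i) = src G (\<alpha> (Suc i)))"

definition inf_path_verts :: "('v, 'e) dgraph \<Rightarrow> (nat \<Rightarrow> 'e) \<Rightarrow> 'v set" where
  "inf_path_verts G \<alpha> = range (\<lambda>i. src G (\<alpha> i))"

definition all_reflexive :: "('v, 'e) dgraph \<Rightarrow> bool" where
  "all_reflexive G \<longleftrightarrow>
     (\<forall>c. is_cycle G c \<longrightarrow> \<not> has_exit G c \<or> extreme_cycle G c) \<and>
     (\<forall>v \<in> verts G. inf_emitter G v \<longrightarrow> (\<exists>c. is_cycle G c \<and> v \<in> cycle_verts G c)) \<and>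
     (\<forall>\<alpha>. is_inf_path G \<alpha> \<longrightarrow>
        finite {e \<in> edges G. src G e \<in> inf_path_verts G \<alpha> \<and>
                  rng G e \<notin> root G (inf_path_verts G \<alpha>)})"

definition strongly_all_reflexive :: "('v, 'e) dgraph \<Rightarrow> bool" where
  "strongly_all_reflexive G \<longleftrightarrow> all_reflexive G \<and> (\<forall>c. is_cycle G c \<longrightarrow> has_exit G c)"

text \<open>Quotient graph E/(H,S): Inl v is the old vertex v, Inr v is the new vertex v';
  Inl e is the old edge e, Inr e is the new edge e'.\<close>
definition quotient_graph :: "('v, 'e) dgraph \<Rightarrow> 'v set \<Rightarrow> 'v set \<Rightarrow> ('v + 'v, 'e + 'e) dgraph" where
  "quotient_graph G H S =
     \<lparr> verts = Inl ` (verts G - H) \<union> Inr ` (breaking G H - S),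
       edges = Inl ` {e \<in> edges G. rng G e \<notin> H} \<union> Inr ` {e \<in> edges G. rng G e \<in> breaking G H - S},
       src = (\<lambda>x. case x of Inl e \<Rightarrow> Inl (src G e) | Inr e \<Rightarrow> Inl (src G e)),
       rng = (\<lambda>x. case x of Inl e \<Rightarrow> Inl (rng G e) | Inr e \<Rightarrow> Inr (rng G e)) \<rparr>"

text \<open>Porcupine graph P_(H,S): Inl v is the old vertex v, Inr p is w^p;
  Inl e is the old edge e, Inr p is f^p.\<close>
definition porc_F :: "('v, 'e) dgraph \<Rightarrow> 'v set \<Rightarrow> 'v set \<Rightarrow> 'e list set" where
  "porc_F G H S =
     {p. is_path G p \<and> path_rng G p \<in> H \<and> src G (last p) \<notin> H \<union> S} \<union>
     {p. is_path G p \<and> path_rng G p \<in> S}"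

definition porcupine_graph :: "('v, 'e) dgraph \<Rightarrow> 'v set \<Rightarrow> 'v set \<Rightarrow> ('v + 'e list, 'e + 'e list) dgraph" where
  "porcupine_graph G H S =
     \<lparr> verts = Inl ` (H \<union> S) \<union> Inr ` porc_F G H S,
       edges = Inl ` {e \<in> edges G. src G e \<in> H} \<union> Inl ` {e \<in> edges G. src G e \<in> S \<and> rng G e \<in> H}
               \<union> Inr ` porc_F G H S,
       src = (\<lambda>x. case x of Inl e \<Rightarrow> Inl (src G e) | Inr p \<Rightarrow> Inr p),
       rng = (\<lambda>x. case x of Inl e \<Rightarrow> Inl (rng G e)
                 | Inr p \<Rightarrow> (if length p = 1 then Inl (rng G (hd p)) else Inr (tl p))) \<rparr>"

end

theory Submission
  imports Defs "HOL-Library.Infinite_Set"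
begin

text \<open>Reflexivity of \<open>(H, S)\<close> forces \<open>S = B_H\<close>, and each side of either equivalence forces
  \<open>S = {}\<close>: an all-reflexive graph has no breaking vertices, and a vertex of \<open>S\<close> would be an
  infinite emitter of the porcupine graph lying on no cycle. With \<open>S = B_H = {}\<close> the quotient is the
  subgraph of \<open>E\<close> on \<open>E^0 - H\<close>. Every cycle of \<open>E\<close> lies inside \<open>H\<close> or outside it, and an
  infinite path either eventually stays in \<open>H\<close>, where it is a path of the porcupine graph, or avoids
  \<open>H\<close>, where it is a path of the quotient; the three conditions of all-reflexivity transfer along
  these correspondences.

  For the converse the key point is \<open>R(H) - H \<subseteq> R(H\<^sup>\<bottom>)\<close>: every vertex of \<open>R(H) - H\<close> reaches a
  vertex outside \<open>R(H)\<close>. Hence no such vertex lies on a closed walk, since the cycle through it would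
  be an extreme cycle of the quotient pulling that vertex back into \<open>R(H)\<close>; so these vertices emit
  only finitely many edges. Nor can an infinite path stay inside \<open>R(H) - H\<close>: repeatedly detouring
  through edges that leave the root of the path would give a path of the quotient with infinitely many
  escaping edges.\<close>

definition edge_rel :: "('v, 'e) dgraph \<Rightarrow> 'v rel" where
  "edge_rel G = {(src G e, rng G e) | e. e \<in> edges G}"

lemma edge_rel_iff: "(u, v) \<in> edge_rel G \<longleftrightarrow> (\<exists>e \<in> edges G. src G e = u \<and> rng G e = v)"
  unfolding edge_rel_def by auto

lemma edge_rel_edge: "e \<in> edges G \<Longrightarrow> (src G e, rng G e) \<in> edge_rel G"
  unfolding edge_rel_def by auto

lemma not_is_path_Nil [simp]: "\<not> is_path G []"
  by (simp add: is_path_def)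

lemma is_path_Cons:
  "is_path G (e # p) \<longleftrightarrow> e \<in> edges G \<and> (p = [] \<or> is_path G p \<and> rng G e = src G (hd p))"
  unfolding is_path_def by (cases p) (auto simp: All_less_Suc2 Suc_less_eq2)

lemma is_path_singleton [simp]: "is_path G [e] \<longleftrightarrow> e \<in> edges G"
  by (simp add: is_path_Cons)

lemma path_src_Cons [simp]: "path_src G (e # p) = src G e"
  by (simp add: path_src_def)

lemma path_rng_Cons: "path_rng G (e # p) = (if p = [] then rng G e else path_rng G p)"
  by (simp add: path_rng_def)

lemma path_in_edges: "is_path G p \<Longrightarrow> e \<in> set p \<Longrightarrow> e \<in> edges G"
  by (auto simp: is_path_def)

lemma is_path_append:
  assumes "is_path G p" "is_path G q" "path_rng G p = path_src G q"
  shows "is_path G (p @ q) \<and> path_src G (p @ q) = path_src G p \<and> path_rng G (p @ q) = path_rng G q"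
  using assms
proof (induction p)
  case (Cons e p)
  then show ?case
    by (cases "p = []")
      (auto simp: is_path_Cons path_rng_Cons path_src_def path_rng_def hd_append)
qed simp

lemma is_path_drop:
  assumes "is_path G p" "k < length p"
  shows "is_path G (drop k p) \<and> path_src G (drop k p) = src G (p ! k) \<and> path_rng G (drop k p) = path_rng G p"
  using assms unfolding is_path_def path_src_def path_rng_def
  by (auto simp: hd_drop_conv_nth dest: in_set_dropD)

lemma is_path_take:
  assumes "is_path G p" "0 < k" "k \<le> length p"
  shows "is_path G (take k p) \<and> path_src G (take k p) = path_src G p \<and> path_rng G (take k p) = rng G (p ! (k - 1))"
  using assms unfolding is_path_def path_src_def path_rng_def
  by (auto simp: last_conv_nth dest: in_set_takeD)

lemma path_imp_trancl: "is_path G p \<Longrightarrow> (path_src G p, path_rng G p) \<in> (edge_rel G)\<^sup>+"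
proof (induction p)
  case (Cons e p)
  then have "(src G e, rng G e) \<in> edge_rel G"
    by (simp add: is_path_Cons edge_rel_edge)
  with Cons show ?case
    by (cases "p = []") (auto simp: is_path_Cons path_rng_Cons path_src_def)
qed simp

lemma trancl_imp_path:
  assumes "(u, v) \<in> (edge_rel G)\<^sup>+"
  obtains p where "is_path G p" "path_src G p = u" "path_rng G p = v"
proof -
  from assms have "\<exists>p. is_path G p \<and> path_src G p = u \<and> path_rng G p = v"
  proof (induction rule: converse_trancl_induct)
    case (base y)
    then obtain e where "e \<in> edges G" "src G e = y" "rng G e = v"
      by (auto simp: edge_rel_iff)
    then show ?case
      by (intro exI[of _ "[e]"]) (simp add: path_rng_Cons)
  next
    case (step y z)
    then obtain e p where "e \<in> edges G" "src G e = y" "rng G e = z"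
      and "is_path G p" "path_src G p = z" "path_rng G p = v"
      by (auto simp: edge_rel_iff)
    then show ?case
      by (intro exI[of _ "e # p"]) (auto simp: is_path_Cons path_rng_Cons path_src_def)
  qed
  then show thesis
    using that by blast
qed

lemma geq_iff_trancl: "geq G u v \<longleftrightarrow> u = v \<and> u \<in> verts G \<or> (u, v) \<in> (edge_rel G)\<^sup>+"
  unfolding geq_def by (metis path_imp_trancl trancl_imp_path)

lemma geq_imp_rtrancl: "geq G u v \<Longrightarrow> (u, v) \<in> (edge_rel G)\<^sup>*"
  by (auto simp: geq_iff_trancl)

lemma geq_iff_rtrancl: "u \<in> verts G \<Longrightarrow> geq G u v \<longleftrightarrow> (u, v) \<in> (edge_rel G)\<^sup>*"
  by (auto simp: geq_iff_trancl rtrancl_eq_or_trancl)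

lemma root_iff_rtrancl: "u \<in> verts G \<Longrightarrow> u \<in> root G V \<longleftrightarrow> (\<exists>v \<in> V. (u, v) \<in> (edge_rel G)\<^sup>*)"
  by (simp add: root_def geq_iff_rtrancl)

lemma root_mono: "V \<subseteq> W \<Longrightarrow> root G V \<subseteq> root G W"
  by (auto simp: root_def)

lemma root_rtrancl_closed:
  assumes "u \<in> verts G" "(u, v) \<in> (edge_rel G)\<^sup>*" "v \<in> root G V"
  shows "u \<in> root G V"
proof -
  obtain w where "w \<in> V" "geq G v w"
    using assms(3) by (auto simp: root_def)
  with assms(1,2) show ?thesis
    by (meson geq_imp_rtrancl root_iff_rtrancl rtrancl_trans)
qed

lemma subset_root: "V \<subseteq> verts G \<Longrightarrow> V \<subseteq> root G V"
  by (auto simp: root_def geq_def)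

lemma path_edge_reachable:
  assumes "is_path G p" "e \<in> set p"
  shows "(path_src G p, src G e) \<in> (edge_rel G)\<^sup>* \<and> (rng G e, path_rng G p) \<in> (edge_rel G)\<^sup>*"
  using assms
proof (induction p)
  case (Cons a p)
  show ?case
  proof (cases "p = []")
    case False
    with Cons.prems have p: "is_path G p" "rng G a = path_src G p" "a \<in> edges G"
      by (auto simp: is_path_Cons path_src_def)
    then have "(src G a, path_src G p) \<in> edge_rel G" "(path_src G p, path_rng G p) \<in> (edge_rel G)\<^sup>*"
      using edge_rel_edge path_imp_trancl by fastforce+
    with p False Cons show ?thesis
      by (auto simp: path_rng_Cons intro: converse_rtrancl_into_rtrancl)
  qed (use Cons.prems in \<open>simp add: path_rng_Cons\<close>)
qed simp

lemma path_src_reaches_rng: "is_path G p \<Longrightarrow> f \<in> set p \<Longrightarrow> (path_src G p, rng G f) \<in> (edge_rel G)\<^sup>*"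
  by (meson path_edge_reachable path_in_edges edge_rel_edge rtrancl.rtrancl_into_rtrancl)

lemma rtrancl_exit_edge:
  assumes "(a, b) \<in> (edge_rel G)\<^sup>*" "a \<in> A" "b \<notin> A"
  obtains e where "e \<in> edges G" "src G e \<in> A" "rng G e \<notin> A"
    "(a, src G e) \<in> (edge_rel G)\<^sup>*" "(rng G e, b) \<in> (edge_rel G)\<^sup>*"
  using assms
proof (induction arbitrary: thesis rule: converse_rtrancl_induct)
  case (step y z)
  then obtain e where "e \<in> edges G" "src G e = y" "rng G e = z"
    by (auto simp: edge_rel_iff)
  with step show ?case
    by (cases "z \<in> A") (blast intro: converse_rtrancl_into_rtrancl)+
qed simp

lemma path_through:
  assumes "(u, x) \<in> (edge_rel G)\<^sup>*" "(x, v) \<in> (edge_rel G)\<^sup>+"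
  obtains p where "is_path G p" "path_src G p = u" "path_rng G p = v" "x \<in> src G ` set p"
proof -
  obtain q where q: "is_path G q" "path_src G q = x" "path_rng G q = v"
    using trancl_imp_path[OF assms(2)] by blast
  then have x: "x \<in> src G ` set q"
    by (cases q) (auto simp: path_src_def)
  show thesis
  proof (cases "u = x")
    case True
    with q x that show thesis
      by blast
  next
    case False
    with assms(1) obtain r where "is_path G r" "path_src G r = u" "path_rng G r = x"
      by (metis rtranclD trancl_imp_path)
    with q x that show thesis
      using is_path_append[of G r q] by auto
  qed
qed

lemma is_path_tl:
  "is_path G p \<Longrightarrow> tl p \<noteq> [] \<Longrightarrow>
    is_path G (tl p) \<and> path_rng G (tl p) = path_rng G p \<and> rng G (hd p) = src G (hd (tl p))"
  by (cases p) (auto simp: is_path_Cons path_rng_Cons)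

lemma closed_path_contains_cycle:
  assumes "is_path G p" "path_src G p = path_rng G p"
  shows "\<exists>c. is_cycle G c \<and> set c \<subseteq> set p"
  using assms
proof (induction "length p" arbitrary: p rule: less_induct)
  case less
  show ?case
  proof (cases "distinct (map (src G) p)")
    case True
    then show ?thesis
      using less.prems by (auto simp: is_cycle_def)
  next
    case False
    then obtain i j where ij: "i < j" "j < length p" "src G (p ! i) = src G (p ! j)"
      unfolding distinct_conv_nth by (auto, metis linorder_neq_iff)
    define q where "q = take (j - i) (drop i p)"
    have d: "is_path G (drop i p)" "path_src G (drop i p) = src G (p ! i)"
      using is_path_drop[OF less.prems(1), of i] ij by auto
    have q: "is_path G q" "path_src G q = src G (p ! i)" "path_rng G q = rng G (p ! (j - 1))"
      using is_path_take[OF d(1), of "j - i"] ij d(2) unfolding q_def by auto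
    have "rng G (p ! (j - 1)) = src G (p ! j)"
      using less.prems(1) ij unfolding is_path_def
      by (metis One_nat_def Suc_pred gr_implies_not_zero not_gr_zero)
    with q ij have "path_src G q = path_rng G q"
      by simp
    moreover have "length q < length p"
      using ij unfolding q_def by simp
    moreover have "set q \<subseteq> set p"
      unfolding q_def by (meson in_set_dropD in_set_takeD subsetI)
    ultimately show ?thesis
      using less.hyps q(1) by blast
  qed
qed

lemma cycle_verts_nonempty: "is_cycle G c \<Longrightarrow> cycle_verts G c \<noteq> {}"
  by (auto simp: is_cycle_def cycle_verts_def is_path_def)

lemma cycle_rng_in_cycle_verts:
  assumes "is_cycle G c" "e \<in> set c"
  shows "rng G e \<in> cycle_verts G c"
proof -
  obtain i where i: "i < length c" "e = c ! i"
    using assms(2) by (auto simp: in_set_conv_nth)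
  show ?thesis
  proof (cases "Suc i < length c")
    case True
    then have "rng G e = src G (c ! Suc i)"
      using assms(1) i unfolding is_cycle_def is_path_def by auto
    then show ?thesis
      using True by (auto simp: cycle_verts_def)
  next
    case False
    with i have "e = last c"
      by (metis Suc_lessI last_conv_nth list.size(3) not_less_zero diff_Suc_1)
    then have "rng G e = src G (hd c)"
      using assms(1) unfolding is_cycle_def path_src_def path_rng_def by simp
    then show ?thesis
      using i by (cases c) (auto simp: cycle_verts_def)
  qed
qed

lemma cycle_verts_reachable:
  assumes "is_cycle G c" "u \<in> cycle_verts G c" "v \<in> cycle_verts G c"
  shows "(u, v) \<in> (edge_rel G)\<^sup>*"
proof -
  have c: "is_path G c" "path_src G c = path_rng G c"
    using assms(1) by (auto simp: is_cycle_def)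
  obtain e f where e: "e \<in> set c" "src G e = u" and f: "f \<in> set c" "src G f = v"
    using assms(2,3) by (auto simp: cycle_verts_def)
  have "(u, rng G e) \<in> edge_rel G"
    using e path_in_edges[OF c(1)] edge_rel_edge by metis
  moreover have "(rng G e, path_rng G c) \<in> (edge_rel G)\<^sup>*" "(path_src G c, v) \<in> (edge_rel G)\<^sup>*"
    using path_edge_reachable[OF c(1)] e f by auto
  ultimately show ?thesis
    using c(2) by (metis converse_rtrancl_into_rtrancl rtrancl_trans)
qed

lemma cycle_verts_closed_walk:
  assumes "is_cycle G c" "u \<in> cycle_verts G c"
  shows "(u, u) \<in> (edge_rel G)\<^sup>+"
proof -
  obtain e where e: "e \<in> set c" "src G e = u"
    using assms(2) by (auto simp: cycle_verts_def)
  have "(u, rng G e) \<in> edge_rel G"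
    using e path_in_edges assms(1) edge_rel_edge unfolding is_cycle_def by metis
  moreover have "(rng G e, u) \<in> (edge_rel G)\<^sup>*"
    using cycle_verts_reachable[OF assms(1) cycle_rng_in_cycle_verts[OF assms(1) e(1)] assms(2)] .
  ultimately show ?thesis
    by (meson rtrancl_into_trancl2)
qed

lemma closed_walk_cycle:
  assumes "(x, x) \<in> (edge_rel G)\<^sup>+"
  obtains c where "is_cycle G c"
    "\<And>y. y \<in> cycle_verts G c \<Longrightarrow> (x, y) \<in> (edge_rel G)\<^sup>* \<and> (y, x) \<in> (edge_rel G)\<^sup>*"
proof -
  obtain p where p: "is_path G p" "path_src G p = x" "path_rng G p = x"
    using trancl_imp_path[OF assms] by blast
  obtain c where c: "is_cycle G c" "set c \<subseteq> set p"
    using closed_path_contains_cycle p by metis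
  have "(x, y) \<in> (edge_rel G)\<^sup>* \<and> (y, x) \<in> (edge_rel G)\<^sup>*" if y: "y \<in> cycle_verts G c" for y
  proof -
    obtain e where e: "e \<in> set p" "src G e = y"
      using y c(2) unfolding cycle_verts_def by blast
    then have "(y, rng G e) \<in> edge_rel G"
      using path_in_edges[OF p(1)] edge_rel_edge by metis
    then show ?thesis
      using path_edge_reachable[OF p(1) e(1)] p e by (metis converse_rtrancl_into_rtrancl)
  qed
  with c that show thesis
    by blast
qed

lemma src_in_inf_path_verts [simp]: "src G (\<alpha> i) \<in> inf_path_verts G \<alpha>"
  by (simp add: inf_path_verts_def)

lemma inf_path_src_in_verts: "wf_dgraph G \<Longrightarrow> is_inf_path G \<alpha> \<Longrightarrow> src G (\<alpha> i) \<in> verts G"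
  by (simp add: is_inf_path_def wf_dgraph_def)

lemma inf_path_verts_subset: "wf_dgraph G \<Longrightarrow> is_inf_path G \<alpha> \<Longrightarrow> inf_path_verts G \<alpha> \<subseteq> verts G"
  by (auto simp: inf_path_verts_def inf_path_src_in_verts)

lemma inf_path_edge_rel: "is_inf_path G \<alpha> \<Longrightarrow> (src G (\<alpha> i), src G (\<alpha> (Suc i))) \<in> edge_rel G"
  unfolding is_inf_path_def by (metis edge_rel_edge)

lemma inf_path_rtrancl:
  assumes "is_inf_path G \<alpha>" "i \<le> j"
  shows "(src G (\<alpha> i), src G (\<alpha> j)) \<in> (edge_rel G)\<^sup>*"
  using assms(2)
  by (induction rule: dec_induct) (auto intro: rtrancl_into_rtrancl inf_path_edge_rel[OF assms(1)])

lemma inf_path_trancl: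
  assumes "is_inf_path G \<alpha>" "i < j"
  shows "(src G (\<alpha> i), src G (\<alpha> j)) \<in> (edge_rel G)\<^sup>+"
proof -
  obtain k where "j = Suc k" "i \<le> k"
    using assms(2) by (cases j) auto
  then show ?thesis
    using inf_path_rtrancl[OF assms(1)] inf_path_edge_rel[OF assms(1)]
    by (metis rtrancl_into_trancl1)
qed

lemma inf_path_suffix: "is_inf_path G \<alpha> \<Longrightarrow> is_inf_path G (\<lambda>i. \<alpha> (N + i))"
  by (simp add: is_inf_path_def)

lemma hereditary_rtrancl_closed:
  assumes "hereditary G H" "(a, b) \<in> (edge_rel G)\<^sup>*" "a \<in> H"
  shows "b \<in> H"
  using assms trancl_imp_path[of a b G]
  by (cases "a = b") (auto simp: rtrancl_eq_or_trancl hereditary_def)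

lemma hereditary_subset_verts: "hereditary G H \<Longrightarrow> H \<subseteq> verts G"
  by (simp add: hereditary_def)

lemma wf_dgraph_src: "wf_dgraph G \<Longrightarrow> e \<in> edges G \<Longrightarrow> src G e \<in> verts G"
  by (simp add: wf_dgraph_def)

lemma wf_dgraph_trancl_verts:
  "wf_dgraph G \<Longrightarrow> (u, v) \<in> (edge_rel G)\<^sup>+ \<Longrightarrow> u \<in> verts G"
  by (auto dest!: tranclD simp: edge_rel_iff wf_dgraph_def)

locale path_segments =
  fixes G :: "('v, 'e) dgraph" and T :: "'v set" and seg :: "'v \<Rightarrow> 'e list"
  assumes seg: "\<And>v. v \<in> T \<Longrightarrow> is_path G (seg v) \<and> path_src G (seg v) = v \<and> path_rng G (seg v) \<in> T"
begin

text \<open>After \<open>n\<close> steps, \<open>walk u n\<close> is the part of the current segment not yet traversed; once a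
  segment is used up, the walk continues with the segment of its endpoint.\<close>

definition walk :: "'v \<Rightarrow> nat \<Rightarrow> 'e list" where
  "walk u n = ((\<lambda>l. if tl l = [] then seg (path_rng G l) else tl l) ^^ n) (seg u)"

lemma walk_Suc:
  "walk u (Suc n) = (if tl (walk u n) = [] then seg (path_rng G (walk u n)) else tl (walk u n))"
  by (simp add: walk_def)

lemma walk_path:
  assumes "u \<in> T"
  shows "is_path G (walk u n) \<and> path_rng G (walk u n) \<in> T"
proof (induction n)
  case 0
  show ?case
    using seg[OF assms] by (simp add: walk_def)
next
  case (Suc n)
  then show ?case
    using seg is_path_tl[of G "walk u n"] by (auto simp: walk_Suc)
qed

lemma walk_link:
  assumes "u \<in> T"
  shows "rng G (hd (walk u n)) = src G (hd (walk u (Suc n)))"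
proof (cases "tl (walk u n) = []")
  case True
  with walk_path[OF assms, of n] have "path_rng G (walk u n) = rng G (hd (walk u n))"
    by (cases "walk u n") (auto simp: path_rng_def)
  with True walk_path[OF assms, of n] seg show ?thesis
    by (simp add: walk_Suc path_src_def)
next
  case False
  with walk_path[OF assms, of n] is_path_tl[of G "walk u n"] show ?thesis
    by (simp add: walk_Suc)
qed

lemma walk_drop: "i < length (walk u n) \<Longrightarrow> walk u (n + i) = drop i (walk u n)"
proof (induction i)
  case (Suc i)
  then have "tl (drop i (walk u n)) \<noteq> []"
    by (simp add: drop_Suc[symmetric] tl_drop)
  with Suc show ?case
    by (simp add: walk_Suc tl_drop drop_Suc)
qed simp

lemma walk_restart:
  assumes "u \<in> T"
  shows "walk u (n + length (walk u n)) = seg (path_rng G (walk u n))"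
proof -
  define l where "l = walk u n"
  have "l \<noteq> []"
    using walk_path[OF assms, of n] by (auto simp: l_def)
  then have "drop (length l - 1) l = [last l]" "length l - 1 < length (walk u n)"
    by (cases l rule: rev_cases, simp_all add: l_def[symmetric])
  then have last: "walk u (n + (length l - 1)) = [last l]"
    using walk_drop unfolding l_def by metis
  have "walk u (Suc (n + (length l - 1))) = seg (path_rng G l)"
    unfolding walk_Suc last by (simp add: path_rng_def)
  moreover have "Suc (n + (length l - 1)) = n + length l"
    using \<open>l \<noteq> []\<close> by simp
  ultimately show ?thesis
    by (metis l_def)
qed

lemma inf_path_of_segments:
  assumes "u \<in> T"
  obtains \<alpha> where "is_inf_path G \<alpha>"
    "\<And>n. \<exists>m \<ge> n. \<exists>v \<in> T. src G (\<alpha> m) = v \<and> (\<forall>i < length (seg v). \<alpha> (m + i) = seg v ! i)"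
proof -
  define \<alpha> where "\<alpha> n = hd (walk u n)" for n
  have "hd (walk u n) \<in> edges G" for n
    using walk_path[OF assms, of n] path_in_edges[of G "walk u n"] by (cases "walk u n") auto
  then have "is_inf_path G \<alpha>"
    using walk_link[OF assms] by (simp add: is_inf_path_def \<alpha>_def)
  moreover have "\<exists>m \<ge> n. \<exists>v \<in> T. src G (\<alpha> m) = v \<and> (\<forall>i < length (seg v). \<alpha> (m + i) = seg v ! i)"
    for n
  proof -
    let ?m = "n + length (walk u n)" and ?v = "path_rng G (walk u n)"
    have \<alpha>_seg: "\<alpha> (?m + i) = seg ?v ! i" if "i < length (seg ?v)" for i
      using that walk_drop[of i u ?m] by (simp add: \<alpha>_def walk_restart[OF assms] hd_drop_conv_nth)
    have v: "?v \<in> T"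
      using walk_path[OF assms] by blast
    then have "seg ?v \<noteq> []" "path_src G (seg ?v) = ?v"
      using seg[OF v] by auto
    then have "src G (\<alpha> ?m) = ?v"
      using \<alpha>_seg[of 0] by (simp add: path_src_def hd_conv_nth)
    with v \<alpha>_seg show ?thesis
      by (intro exI[of _ ?m]) auto
  qed
  ultimately show thesis
    using that by blast
qed

end

definition escaping_edges :: "('v, 'e) dgraph \<Rightarrow> (nat \<Rightarrow> 'e) \<Rightarrow> 'e set" where
  "escaping_edges G \<alpha> = {e \<in> edges G. src G e \<in> inf_path_verts G \<alpha> \<and>
     rng G e \<notin> root G (inf_path_verts G \<alpha>)}"

lemma all_reflexive_iff:
  "all_reflexive G \<longleftrightarrow>
     (\<forall>c. is_cycle G c \<longrightarrow> has_exit G c \<longrightarrow> extreme_cycle G c) \<and>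
     (\<forall>v \<in> verts G. inf_emitter G v \<longrightarrow> (\<exists>c. is_cycle G c \<and> v \<in> cycle_verts G c)) \<and>
     (\<forall>\<alpha>. is_inf_path G \<alpha> \<longrightarrow> finite (escaping_edges G \<alpha>))"
  unfolding all_reflexive_def escaping_edges_def by blast

lemma all_reflexive_extreme_cycle:
  "all_reflexive G \<Longrightarrow> is_cycle G c \<Longrightarrow> has_exit G c \<Longrightarrow> extreme_cycle G c"
  unfolding all_reflexive_iff by blast

lemma all_reflexive_inf_emitter_on_cycle:
  assumes "all_reflexive G" "v \<in> verts G" "inf_emitter G v"
  obtains c where "is_cycle G c" "v \<in> cycle_verts G c"
  using assms unfolding all_reflexive_iff by blast

lemma all_reflexive_finite_escaping_edges:
  "all_reflexive G \<Longrightarrow> is_inf_path G \<alpha> \<Longrightarrow> finite (escaping_edges G \<alpha>)"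
  unfolding all_reflexive_iff by blast

lemma has_exitI: "is_exit G c e \<Longrightarrow> has_exit G c"
  by (auto simp: has_exit_def)

lemma all_reflexive_cycle_out_edge_returns:
  assumes "all_reflexive G" "is_cycle G c" "e \<in> edges G" "src G e \<in> cycle_verts G c"
  obtains w where "w \<in> cycle_verts G c" "(rng G e, w) \<in> (edge_rel G)\<^sup>*"
proof (cases "e \<in> set c")
  case True
  then show thesis
    using that cycle_rng_in_cycle_verts[OF assms(2)] by blast
next
  case False
  with assms have "is_exit G c e"
    by (simp add: is_exit_def)
  then have "extreme_cycle G c"
    by (rule all_reflexive_extreme_cycle[OF assms(1,2) has_exitI])
  then obtain w where "w \<in> cycle_verts G c" "geq G (path_rng G [e]) w"
    using assms(3,4) unfolding extreme_cycle_def by (metis is_path_singleton path_src_Cons)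
  then show thesis
    using that by (auto simp: path_rng_def dest: geq_imp_rtrancl)
qed

lemma escaping_edges_subset_suffix:
  "escaping_edges G \<alpha> \<subseteq> escaping_edges G (\<lambda>i. \<alpha> (N + i)) \<union> (\<Union>j<N. out_edges G (src G (\<alpha> j)))"
proof
  fix e
  assume "e \<in> escaping_edges G \<alpha>"
  then obtain k where k: "e \<in> edges G" "src G e = src G (\<alpha> k)"
    "rng G e \<notin> root G (inf_path_verts G \<alpha>)"
    by (auto simp: escaping_edges_def inf_path_verts_def)
  show "e \<in> escaping_edges G (\<lambda>i. \<alpha> (N + i)) \<union> (\<Union>j<N. out_edges G (src G (\<alpha> j)))"
  proof (cases "k < N")
    case True
    then show ?thesis
      using k by (auto simp: out_edges_def)
  next
    case False
    then have "src G e \<in> inf_path_verts G (\<lambda>i. \<alpha> (N + i))"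
      using k(2) unfolding inf_path_verts_def by (metis le_add_diff_inverse not_less rangeI)
    moreover have "inf_path_verts G (\<lambda>i. \<alpha> (N + i)) \<subseteq> inf_path_verts G \<alpha>"
      by (auto simp: inf_path_verts_def)
    ultimately show ?thesis
      using k root_mono by (fastforce simp: escaping_edges_def)
  qed
qed

lemma finite_escaping_edges_suffix:
  assumes "finite (escaping_edges G (\<lambda>i. \<alpha> (N + i)))"
    and "\<And>j. j < N \<Longrightarrow> finite (out_edges G (src G (\<alpha> j)))"
  shows "finite (escaping_edges G \<alpha>)"
  using escaping_edges_subset_suffix[of G \<alpha> N] assms
  by (meson finite_UN_I finite_UnI finite_lessThan finite_subset lessThan_iff)

lemma breaking_infinite_edges_into:
  assumes "wf_dgraph G" "v \<in> breaking G H"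
  shows "infinite {e \<in> out_edges G v. rng G e \<in> H}"
proof
  assume "finite {e \<in> out_edges G v. rng G e \<in> H}"
  moreover have "finite {e \<in> out_edges G v. rng G e \<in> verts G - H}" "infinite (out_edges G v)"
    using assms(2) by (auto simp: breaking_def inf_emitter_def)
  moreover have "out_edges G v \<subseteq> {e \<in> out_edges G v. rng G e \<in> H} \<union> {e \<in> out_edges G v. rng G e \<in> verts G - H}"
    using assms(1) by (auto simp: out_edges_def wf_dgraph_def)
  ultimately show False
    by (meson finite_UnI finite_subset)
qed

lemma all_reflexive_breaking_empty:
  assumes wf: "wf_dgraph G" and her: "hereditary G H" and ar: "all_reflexive G"
  shows "breaking G H = {}"
proof (rule ccontr)
  assume "breaking G H \<noteq> {}"
  then obtain v where v: "v \<in> breaking G H"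
    by blast
  then obtain e where e: "e \<in> edges G" "src G e = v" "rng G e \<in> H"
    using breaking_infinite_edges_into[OF wf v] by (auto simp: out_edges_def dest!: infinite_imp_nonempty)
  obtain c where c: "is_cycle G c" "v \<in> cycle_verts G c"
    using all_reflexive_inf_emitter_on_cycle[OF ar] v by (auto simp: breaking_def)
  then obtain w where "w \<in> cycle_verts G c" "(rng G e, w) \<in> (edge_rel G)\<^sup>*"
    using all_reflexive_cycle_out_edge_returns[OF ar c(1) e(1)] e(2) by blast
  then have "v \<in> H"
    using cycle_verts_reachable[OF c(1) _ c(2)] e(3) hereditary_rtrancl_closed[OF her]
    by (meson rtrancl_trans)
  with v show False
    by (simp add: breaking_def)
qed

lemma breaking_perpH_disjoint:
  assumes wf: "wf_dgraph G" and her: "hereditary G H"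
  shows "breaking G H \<inter> breaking G (perpH G H) = {}"
proof (rule ccontr)
  assume "breaking G H \<inter> breaking G (perpH G H) \<noteq> {}"
  then obtain v where v: "v \<in> breaking G H" "v \<in> breaking G (perpH G H)"
    by blast
  have "{e \<in> out_edges G v. rng G e \<in> H} \<subseteq> {e \<in> out_edges G v. rng G e \<in> verts G - perpH G H}"
    using subset_root[OF hereditary_subset_verts[OF her]] hereditary_subset_verts[OF her]
    by (auto simp: perpH_def)
  moreover have "finite {e \<in> out_edges G v. rng G e \<in> verts G - perpH G H}"
    using v(2) by (simp add: breaking_def)
  ultimately show False
    using breaking_infinite_edges_into[OF wf v(1)] finite_subset by blast
qed

lemma reflexive_pair_S_eq_breaking:
  assumes "wf_dgraph G" "reflexive_pair G H S"
  shows "S = breaking G H"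
proof -
  have "hereditary G H" "S \<subseteq> breaking G H"
    and "S = breaking G H - (breaking G (perpH G H) - S)"
    using assms(2) by (auto simp: reflexive_pair_def admissible_def perpS_def)
  moreover from this have "breaking G H \<subseteq> S"
    using breaking_perpH_disjoint[OF assms(1)] by auto
  ultimately show ?thesis
    by blast
qed

lemma reflexive_pair_root_perpH:
  "reflexive_pair G H S \<Longrightarrow> v \<in> root G H - H \<Longrightarrow> v \<in> root G (perpH G H)"
  unfolding reflexive_pair_def perpH_def root_def by blast

text \<open>The new vertex \<open>w\<^sup>p\<close> of the porcupine graph lies \<open>length p\<close> edges above the old vertices, so
  every edge leaving a new vertex decreases this rank.\<close>

definition porc_rank :: "'v + 'e list \<Rightarrow> nat" where
  "porc_rank x = (case x of Inl _ \<Rightarrow> 0 | Inr p \<Rightarrow> length p)"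

locale hereditary_set =
  fixes E :: "('v, 'e) dgraph" and H :: "'v set"
  assumes wf: "wf_dgraph E" and hereditary: "hereditary E H"
begin

lemma H_subset_verts: "H \<subseteq> verts E"
  using hereditary by (rule hereditary_subset_verts)

lemma hereditary_reach: "(a, b) \<in> (edge_rel E)\<^sup>* \<Longrightarrow> a \<in> H \<Longrightarrow> b \<in> H"
  using hereditary_rtrancl_closed[OF hereditary] by blast

lemma H_subset_root: "H \<subseteq> root E H"
  using subset_root H_subset_verts by blast

lemma hereditary_path: "is_path E p \<Longrightarrow> path_src E p \<in> H \<Longrightarrow> path_rng E p \<in> H"
  using hereditary by (simp add: hereditary_def)

lemma hereditary_edge: "e \<in> edges E \<Longrightarrow> src E e \<in> H \<Longrightarrow> rng E e \<in> H"
  using hereditary_reach edge_rel_edge by (meson r_into_rtrancl)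

lemma cycle_verts_subset_or_disjoint_H:
  assumes "is_cycle E c"
  shows "cycle_verts E c \<subseteq> H \<or> cycle_verts E c \<inter> H = {}"
  using cycle_verts_reachable[OF assms] hereditary_reach by blast

lemma porcupine_all_reflexive_S_empty:
  assumes "S \<subseteq> breaking E H" and "all_reflexive (porcupine_graph E H S)"
  shows "S = {}"
proof (rule ccontr)
  let ?P = "porcupine_graph E H S"
  assume "S \<noteq> {}"
  then obtain v where "v \<in> S"
    by blast
  then have v: "v \<in> breaking E H" "v \<notin> H" "Inl v \<in> verts ?P"
    using assms(1) by (auto simp: breaking_def porcupine_graph_def)
  have "Inl ` {e \<in> out_edges E v. rng E e \<in> H} \<subseteq> out_edges ?P (Inl v)"
    using \<open>v \<in> S\<close> by (auto simp: out_edges_def porcupine_graph_def)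
  then have "inf_emitter ?P (Inl v)"
    using breaking_infinite_edges_into[OF wf v(1)] unfolding inf_emitter_def
    by (meson finite_imageD finite_subset inj_Inl inj_on_subset subset_UNIV)
  then obtain c where "is_cycle ?P c" "Inl v \<in> cycle_verts ?P c"
    using all_reflexive_inf_emitter_on_cycle[OF assms(2) v(3)] by blast
  then have closed: "(Inl v, Inl v) \<in> (edge_rel ?P)\<^sup>+"
    by (rule cycle_verts_closed_walk)
  have successor_in_H: "z \<in> Inl ` H" if step: "(Inl a, z) \<in> edge_rel ?P" for a z
  proof -
    obtain x where x: "x \<in> edges ?P" "src ?P x = Inl a" "rng ?P x = z"
      using step unfolding edge_rel_iff by blast
    then obtain e where "x = Inl e"
      by (cases x) (auto simp: porcupine_graph_def)
    with x show ?thesis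
      using hereditary_edge by (auto simp: porcupine_graph_def)
  qed
  have "y \<in> Inl ` H" if "(Inl v, y) \<in> (edge_rel ?P)\<^sup>+" for y
    using that by (induction rule: trancl_induct) (auto intro: successor_in_H)
  with closed v(2) show False
    by blast
qed

abbreviation P :: "('v + 'e list, 'e + 'e list) dgraph" where
  "P \<equiv> porcupine_graph E H {}"

lemma P_verts: "verts P = Inl ` H \<union> Inr ` porc_F E H {}"
  by (simp add: porcupine_graph_def)

lemma P_edges: "edges P = Inl ` {e \<in> edges E. src E e \<in> H} \<union> Inr ` porc_F E H {}"
  by (simp add: porcupine_graph_def)

lemma P_src_Inl [simp]: "src P (Inl e) = Inl (src E e)"
  by (simp add: porcupine_graph_def)

lemma P_rng_Inl [simp]: "rng P (Inl e) = Inl (rng E e)"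
  by (simp add: porcupine_graph_def)

lemma P_src_Inr [simp]: "src P (Inr p) = Inr p"
  by (simp add: porcupine_graph_def)

lemma P_rng_Inr: "rng P (Inr p) = (if length p = 1 then Inl (rng E (hd p)) else Inr (tl p))"
  by (simp add: porcupine_graph_def)

lemma P_Inl_edge_iff [simp]: "Inl e \<in> edges P \<longleftrightarrow> e \<in> edges E \<and> src E e \<in> H"
  by (auto simp: P_edges)

lemma P_Inl_vert_iff [simp]: "Inl a \<in> verts P \<longleftrightarrow> a \<in> H"
  by (auto simp: P_verts)

lemma P_out_edges_Inl: "v \<in> H \<Longrightarrow> out_edges P (Inl v) = Inl ` out_edges E v"
  by (auto simp: out_edges_def P_edges)

lemma P_out_edges_Inr: "out_edges P (Inr p) \<subseteq> {Inr p}"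
  by (auto simp: out_edges_def P_edges)

lemma P_path_map_iff: "is_path P (map Inl p) \<longleftrightarrow> is_path E p \<and> (\<forall>e \<in> set p. src E e \<in> H)"
  unfolding is_path_def by auto

lemma P_path_mapI:
  assumes "is_path E p" "path_src E p \<in> H"
  shows "is_path P (map Inl p)"
  using assms path_edge_reachable[OF assms(1)] hereditary_reach
  by (auto simp: P_path_map_iff)

lemma P_path_src [simp]: "p \<noteq> [] \<Longrightarrow> path_src P (map Inl p) = Inl (path_src E p)"
  by (simp add: path_src_def hd_map)

lemma P_path_rng [simp]: "p \<noteq> [] \<Longrightarrow> path_rng P (map Inl p) = Inl (path_rng E p)"
  by (simp add: path_rng_def last_map)

lemma P_path_from_Inl:
  assumes "is_path P p" "src P (hd p) = Inl a"
  obtains p' where "p = map Inl p'" "is_path E p'" "\<forall>e \<in> set p'. src E e \<in> H"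
proof -
  from assms have "\<forall>x \<in> set p. isl x"
  proof (induction p arbitrary: a)
    case (Cons x p)
    then obtain e where e: "x = Inl e"
      by (cases x) (auto simp: is_path_Cons)
    with Cons show ?case
      using Cons.IH[of "rng E e"] by (cases "p = []") (auto simp: is_path_Cons)
  qed simp
  then have "p = map Inl (map projl p)"
    by (induction p) auto
  with assms(1) that show thesis
    by (metis P_path_map_iff)
qed

lemma porcupine_geq_iff:
  assumes "a \<in> H"
  shows "geq P (Inl a) (Inl b) \<longleftrightarrow> geq E a b"
proof
  assume "geq P (Inl a) (Inl b)"
  then consider "a = b" | p where "is_path P p" "path_src P p = Inl a" "path_rng P p = Inl b"
    unfolding geq_def by auto
  then show "geq E a b"
  proof cases
    case 1
    then show ?thesis
      using assms H_subset_verts by (auto simp: geq_def)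
  next
    case 2
    then obtain p' where "p = map Inl p'" "is_path E p'"
      using P_path_from_Inl by (metis path_src_def)
    with 2 show ?thesis
      unfolding geq_def by (metis P_path_rng P_path_src not_is_path_Nil sum.inject(1))
  qed
next
  assume "geq E a b"
  then consider "a = b" | p where "is_path E p" "path_src E p = a" "path_rng E p = b"
    unfolding geq_def by auto
  then show "geq P (Inl a) (Inl b)"
  proof cases
    case 1
    then show ?thesis
      using assms by (simp add: geq_def)
  next
    case 2
    then have "is_path P (map Inl p)"
      using P_path_mapI assms by blast
    with 2 show ?thesis
      unfolding geq_def by (metis P_path_rng P_path_src not_is_path_Nil)
  qed
qed

lemma root_porcupine_iff: "a \<in> H \<Longrightarrow> Inl a \<in> root P (Inl ` V) \<longleftrightarrow> a \<in> root E V"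
  using H_subset_verts by (auto simp: root_def porcupine_geq_iff)

lemma P_cycle_verts [simp]: "cycle_verts P (map Inl c) = Inl ` cycle_verts E c"
  unfolding cycle_verts_def by (auto simp: image_image)

lemma P_exit_iff: "is_exit P (map Inl c) x \<longleftrightarrow> (\<exists>e. x = Inl e \<and> is_exit E c e \<and> src E e \<in> H)"
  by (cases x) (auto simp: is_exit_def)

lemma P_inf_path_verts [simp]: "inf_path_verts P (Inl \<circ> \<beta>) = Inl ` inf_path_verts E \<beta>"
  by (auto simp: inf_path_verts_def)

lemma P_inf_path_map_iff: "is_inf_path P (Inl \<circ> \<beta>) \<longleftrightarrow> is_inf_path E \<beta> \<and> (\<forall>i. src E (\<beta> i) \<in> H)"
  unfolding is_inf_path_def by (auto simp: all_conj_distrib)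

lemma escaping_edges_porcupine:
  assumes "\<And>i. src E (\<beta> i) \<in> H"
  shows "escaping_edges P (Inl \<circ> \<beta>) = Inl ` escaping_edges E \<beta>"
proof -
  have V: "inf_path_verts E \<beta> \<subseteq> H"
    using assms by (auto simp: inf_path_verts_def)
  have "x \<in> escaping_edges P (Inl \<circ> \<beta>) \<longleftrightarrow> x \<in> Inl ` escaping_edges E \<beta>" for x
  proof (cases x)
    case (Inl e)
    have "e \<in> edges E \<Longrightarrow> src E e \<in> inf_path_verts E \<beta> \<Longrightarrow> rng E e \<in> H"
      using V hereditary_edge by blast
    with Inl V show ?thesis
      by (auto simp: escaping_edges_def root_porcupine_iff)
  qed (auto simp: escaping_edges_def inf_path_verts_def)
  then show ?thesis
    by blast
qed

end

context hereditary_set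
begin

lemma P_edge_rank:
  assumes "(x, y) \<in> edge_rel P"
  shows "porc_rank y \<le> porc_rank x \<and> (\<not> isl x \<longrightarrow> porc_rank y < porc_rank x)"
proof -
  obtain z where z: "z \<in> edges P" "src P z = x" "rng P z = y"
    using assms by (auto simp: edge_rel_iff)
  show ?thesis
  proof (cases z)
    case (Inr p)
    then have "p \<noteq> []"
      using z(1) by (auto simp: P_edges porc_F_def)
    with z Inr show ?thesis
      by (auto simp: P_rng_Inr porc_rank_def)
  qed (use z in \<open>auto simp: porc_rank_def\<close>)
qed

lemma P_trancl_rank:
  "(x, y) \<in> (edge_rel P)\<^sup>+ \<Longrightarrow> porc_rank y \<le> porc_rank x \<and> (\<not> isl x \<longrightarrow> porc_rank y < porc_rank x)"
  by (induction rule: trancl_induct) (fastforce dest: P_edge_rank)+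

lemma P_closed_walk_isl: "(x, x) \<in> (edge_rel P)\<^sup>+ \<Longrightarrow> isl x"
  using P_trancl_rank by fastforce

lemma P_cycle_map_iff: "is_cycle P (map Inl c) \<longleftrightarrow> is_cycle E c \<and> cycle_verts E c \<subseteq> H"
  unfolding is_cycle_def using P_path_map_iff[of c]
  by (cases "c = []") (auto simp: distinct_map inj_on_def comp_def cycle_verts_def)

lemma P_cycleD:
  assumes "is_cycle P c"
  obtains c' where "c = map Inl c'" "is_cycle E c'" "cycle_verts E c' \<subseteq> H"
proof -
  have "src P (hd c) \<in> cycle_verts P c"
    using assms by (cases c) (auto simp: is_cycle_def cycle_verts_def)
  then obtain a where "src P (hd c) = Inl a"
    using P_closed_walk_isl cycle_verts_closed_walk[OF assms] by (metis isl_def)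
  then obtain c' where "c = map Inl c'"
    using P_path_from_Inl assms by (metis is_cycle_def)
  with assms that show thesis
    using P_cycle_map_iff by blast
qed

lemma P_inf_path_eventually_Inl:
  assumes "is_inf_path P \<alpha>"
  obtains N where "\<And>i. i < N \<Longrightarrow> \<not> isl (\<alpha> i)" "\<And>i. N \<le> i \<Longrightarrow> isl (\<alpha> i)"
proof -
  have isl_src: "isl (src P x) \<longleftrightarrow> isl x" for x
    by (cases x) auto
  have "\<exists>n. isl (\<alpha> n)"
  proof (rule ccontr)
    assume "\<nexists>n. isl (\<alpha> n)"
    then have descent: "porc_rank (src P (\<alpha> (Suc i))) < porc_rank (src P (\<alpha> i))" for i
      using P_edge_rank[OF inf_path_edge_rel[OF assms]] isl_src by blast
    have "porc_rank (src P (\<alpha> i)) + i \<le> porc_rank (src P (\<alpha> 0))" for i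
    proof (induction i)
      case (Suc i)
      then show ?case
        using descent[of i] by linarith
    qed simp
    from this[of "Suc (porc_rank (src P (\<alpha> 0)))"] show False
      by simp
  qed
  define N where "N = (LEAST n. isl (\<alpha> n))"
  have "isl (\<alpha> i)" if "N \<le> i" for i
    using that
  proof (induction rule: dec_induct)
    case base
    then show ?case
      unfolding N_def using \<open>\<exists>n. isl (\<alpha> n)\<close> by (rule LeastI_ex)
  next
    case (step k)
    then obtain e where "\<alpha> k = Inl e"
      by (metis isl_def)
    then have "isl (src P (\<alpha> (Suc k)))"
      using assms unfolding is_inf_path_def by (metis P_rng_Inl isl_def)
    then show ?case
      using isl_src by simp
  qed
  moreover have "\<not> isl (\<alpha> i)" if "i < N" for i
    using that not_less_Least unfolding N_def by blast
  ultimately show thesis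
    using that by blast
qed

lemma porcupine_cycle_extreme:
  assumes ar: "all_reflexive E" and c: "is_cycle P c" "has_exit P c"
  shows "extreme_cycle P c"
proof -
  obtain c' where c': "c = map Inl c'" "is_cycle E c'" "cycle_verts E c' \<subseteq> H"
    using P_cycleD c(1) by blast
  have ext: "extreme_cycle E c'"
    using c(2) c'(1) all_reflexive_extreme_cycle[OF ar c'(2)] by (auto simp: has_exit_def P_exit_iff)
  have "\<exists>w \<in> cycle_verts P c. geq P (path_rng P p) w"
    if p: "is_path P p" "path_src P p \<in> cycle_verts P c" for p
  proof -
    obtain a where "src P (hd p) = Inl a"
      using p(2) c'(1) by (auto simp: path_src_def)
    then obtain p' where p': "p = map Inl p'" "is_path E p'"
      using P_path_from_Inl p(1) by blast
    have ne: "p' \<noteq> []"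
      using p'(2) by auto
    then have src_p': "path_src E p' \<in> cycle_verts E c'"
      using p(2) p'(1) c'(1) by auto
    then obtain w where "w \<in> cycle_verts E c'" "geq E (path_rng E p') w"
      using ext p'(2) unfolding extreme_cycle_def by blast
    moreover have "path_rng E p' \<in> H"
      using src_p' c'(3) hereditary_path[OF p'(2)] by blast
    ultimately show ?thesis
      using ne p'(1) c'(1) by (auto simp: porcupine_geq_iff)
  qed
  with c(2) show ?thesis
    unfolding extreme_cycle_def by blast
qed

lemma porcupine_inf_emitter_on_cycle:
  assumes ar: "all_reflexive E" and v: "v \<in> verts P" "inf_emitter P v"
  shows "\<exists>c. is_cycle P c \<and> v \<in> cycle_verts P c"
proof (cases v)
  case (Inr p)
  then have "finite (out_edges P v)"
    using P_out_edges_Inr finite_subset by fastforce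
  with v(2) show ?thesis
    by (simp add: inf_emitter_def)
next
  case (Inl a)
  with v have a: "a \<in> H" "inf_emitter E a"
    using P_out_edges_Inl by (auto simp: inf_emitter_def finite_image_iff)
  then obtain c where c: "is_cycle E c" "a \<in> cycle_verts E c"
    using all_reflexive_inf_emitter_on_cycle[OF ar] H_subset_verts by blast
  have "cycle_verts E c \<subseteq> H"
    using cycle_verts_reachable[OF c(1) c(2)] a(1) hereditary_reach by blast
  with c Inl show ?thesis
    by (intro exI[of _ "map Inl c"]) (auto simp: P_cycle_map_iff)
qed

lemma porcupine_finite_escaping_edges:
  assumes ar: "all_reflexive E" and \<alpha>: "is_inf_path P \<alpha>"
  shows "finite (escaping_edges P \<alpha>)"
proof -
  obtain N where N: "\<And>i. i < N \<Longrightarrow> \<not> isl (\<alpha> i)" "\<And>i. N \<le> i \<Longrightarrow> isl (\<alpha> i)"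
    using P_inf_path_eventually_Inl[OF \<alpha>] by blast
  define \<beta> where "\<beta> i = projl (\<alpha> (N + i))" for i
  have suffix: "(\<lambda>i. \<alpha> (N + i)) = Inl \<circ> \<beta>"
    using N(2) by (auto simp: \<beta>_def)
  then have "is_inf_path E \<beta>" "\<And>i. src E (\<beta> i) \<in> H"
    using inf_path_suffix[OF \<alpha>, of N] P_inf_path_map_iff by metis+
  then have "finite (escaping_edges P (\<lambda>i. \<alpha> (N + i)))"
    using suffix escaping_edges_porcupine all_reflexive_finite_escaping_edges[OF ar] by simp
  moreover have "finite (out_edges P (src P (\<alpha> j)))" if "j < N" for j
    using N(1)[OF that] P_out_edges_Inr finite_subset by (cases "\<alpha> j") fastforce+
  ultimately show ?thesis
    by (rule finite_escaping_edges_suffix)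
qed

lemma all_reflexive_porcupine:
  assumes "all_reflexive E"
  shows "all_reflexive P"
  using porcupine_cycle_extreme[OF assms] porcupine_inf_emitter_on_cycle[OF assms]
    porcupine_finite_escaping_edges[OF assms]
  unfolding all_reflexive_iff[of P] by blast

end

locale no_breaking_set = hereditary_set +
  assumes no_breaking: "breaking E H = {}"
begin

abbreviation Q where
  "Q \<equiv> quotient_graph E H {}"

lemma Q_verts: "verts Q = Inl ` (verts E - H)"
  by (simp add: quotient_graph_def no_breaking)

lemma Q_edges: "edges Q = Inl ` {e \<in> edges E. rng E e \<notin> H}"
  by (simp add: quotient_graph_def no_breaking)

lemma Q_src [simp]: "src Q (Inl e) = Inl (src E e)"
  by (simp add: quotient_graph_def)

lemma Q_rng [simp]: "rng Q (Inl e) = Inl (rng E e)"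
  by (simp add: quotient_graph_def)

lemma Q_Inl_edge_iff [simp]: "Inl e \<in> edges Q \<longleftrightarrow> e \<in> edges E \<and> rng E e \<notin> H"
  by (auto simp: Q_edges)

lemma Q_Inl_vert_iff [simp]: "Inl a \<in> verts Q \<longleftrightarrow> a \<in> verts E \<and> a \<notin> H"
  by (auto simp: Q_verts)

lemma Q_out_edges: "out_edges Q (Inl v) = Inl ` {e \<in> out_edges E v. rng E e \<notin> H}"
  by (auto simp: out_edges_def Q_edges)

lemma Q_path_map_iff: "is_path Q (map Inl p) \<longleftrightarrow> is_path E p \<and> (\<forall>e \<in> set p. rng E e \<notin> H)"
  unfolding is_path_def by auto

lemma Q_path_src [simp]: "p \<noteq> [] \<Longrightarrow> path_src Q (map Inl p) = Inl (path_src E p)"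
  by (simp add: path_src_def hd_map)

lemma Q_path_rng [simp]: "p \<noteq> [] \<Longrightarrow> path_rng Q (map Inl p) = Inl (path_rng E p)"
  by (simp add: path_rng_def last_map)

lemma Q_pathD:
  assumes "is_path Q p"
  obtains p' where "p = map Inl p'" "is_path E p'" "\<forall>e \<in> set p'. rng E e \<notin> H"
proof -
  have "set p \<subseteq> edges Q"
    using assms by (simp add: is_path_def)
  then have "p = map Inl (map projl p)"
    by (induction p) (auto simp: Q_edges)
  with assms that show thesis
    by (metis Q_path_map_iff)
qed

lemma quotient_geq_iff:
  assumes "b \<notin> H"
  shows "geq Q (Inl a) (Inl b) \<longleftrightarrow> geq E a b"
proof
  assume "geq Q (Inl a) (Inl b)"
  then consider "a = b" "a \<in> verts E" | p where "is_path Q p" "path_src Q p = Inl a" "path_rng Q p = Inl b"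
    unfolding geq_def by auto
  then show "geq E a b"
  proof cases
    case 1
    then show ?thesis
      by (simp add: geq_def)
  next
    case 2
    then obtain p' where "p = map Inl p'" "is_path E p'"
      using Q_pathD by blast
    with 2 show ?thesis
      unfolding geq_def by (metis Q_path_rng Q_path_src not_is_path_Nil sum.inject(1))
  qed
next
  assume "geq E a b"
  then consider "a = b" "a \<in> verts E" | p where "is_path E p" "path_src E p = a" "path_rng E p = b"
    unfolding geq_def by auto
  then show "geq Q (Inl a) (Inl b)"
  proof cases
    case 1
    then show ?thesis
      using assms by (simp add: geq_def)
  next
    case 2
    then have "\<forall>e \<in> set p. rng E e \<notin> H"
      using path_edge_reachable[OF 2(1)] assms hereditary_reach by blast
    with 2 have "is_path Q (map Inl p)"
      by (simp add: Q_path_map_iff)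
    with 2 show ?thesis
      unfolding geq_def by (metis Q_path_rng Q_path_src not_is_path_Nil)
  qed
qed

lemma root_quotient_iff:
  assumes "a \<notin> H" "V \<inter> H = {}"
  shows "Inl a \<in> root Q (Inl ` V) \<longleftrightarrow> a \<in> root E V"
proof -
  have "geq Q (Inl a) (Inl v) \<longleftrightarrow> geq E a v" if "v \<in> V" for v
    using that assms(2) quotient_geq_iff by blast
  with assms(1) show ?thesis
    by (auto simp: root_def)
qed

lemma Q_cycle_verts [simp]: "cycle_verts Q (map Inl c) = Inl ` cycle_verts E c"
  unfolding cycle_verts_def by (auto simp: image_image)

lemma Q_cycle_map_iff: "is_cycle Q (map Inl c) \<longleftrightarrow> is_cycle E c \<and> cycle_verts E c \<inter> H = {}"
proof -
  have "is_cycle Q (map Inl c) \<longleftrightarrow> is_cycle E c \<and> (\<forall>e \<in> set c. rng E e \<notin> H)"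
    unfolding is_cycle_def using Q_path_map_iff[of c]
    by (cases "c = []") (auto simp: distinct_map inj_on_def comp_def)
  moreover have "(\<forall>e \<in> set c. rng E e \<notin> H) \<longleftrightarrow> cycle_verts E c \<inter> H = {}" if "is_cycle E c"
    using cycle_rng_in_cycle_verts[OF that] hereditary_edge path_in_edges that
    by (fastforce simp: cycle_verts_def is_cycle_def)
  ultimately show ?thesis
    by blast
qed

lemma Q_cycleD:
  assumes "is_cycle Q c"
  obtains c' where "c = map Inl c'" "is_cycle E c'" "cycle_verts E c' \<inter> H = {}"
  using assms Q_pathD Q_cycle_map_iff by (metis is_cycle_def)

lemma Q_exit_iff: "is_exit Q (map Inl c) x \<longleftrightarrow> (\<exists>e. x = Inl e \<and> is_exit E c e \<and> rng E e \<notin> H)"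
  by (cases x) (auto simp: is_exit_def Q_edges)

lemma Q_inf_path_verts [simp]: "inf_path_verts Q (Inl \<circ> \<beta>) = Inl ` inf_path_verts E \<beta>"
  by (auto simp: inf_path_verts_def)

lemma Q_inf_path_mapI:
  assumes "is_inf_path E \<beta>" "\<And>i. src E (\<beta> i) \<notin> H"
  shows "is_inf_path Q (Inl \<circ> \<beta>)"
  using assms by (auto simp: is_inf_path_def)

lemma Q_inf_pathD:
  assumes "is_inf_path Q \<alpha>"
  obtains \<beta> where "\<alpha> = Inl \<circ> \<beta>" "is_inf_path E \<beta>" "\<And>i. src E (\<beta> i) \<notin> H"
proof -
  have edges: "\<alpha> i \<in> Inl ` {e \<in> edges E. rng E e \<notin> H}" for i
    using assms by (simp add: is_inf_path_def Q_edges)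
  have "\<alpha> i = Inl (projl (\<alpha> i))" for i
    using edges[of i] by force
  then have \<alpha>: "\<alpha> = Inl \<circ> (projl \<circ> \<alpha>)"
    by (simp add: fun_eq_iff)
  moreover have "is_inf_path E (projl \<circ> \<alpha>)"
    using assms edges by (subst (asm) \<alpha>) (auto simp: is_inf_path_def)
  moreover have "src E ((projl \<circ> \<alpha>) i) \<notin> H" for i
    using edges[of i] hereditary_edge by force
  ultimately show thesis
    using that by blast
qed

lemma escaping_edges_quotient:
  assumes "\<And>i. src E (\<beta> i) \<notin> H"
  shows "escaping_edges Q (Inl \<circ> \<beta>) = Inl ` {e \<in> escaping_edges E \<beta>. rng E e \<notin> H}"
proof -
  have V: "inf_path_verts E \<beta> \<inter> H = {}"
    using assms by (auto simp: inf_path_verts_def)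
  have "x \<in> escaping_edges Q (Inl \<circ> \<beta>) \<longleftrightarrow> x \<in> Inl ` {e \<in> escaping_edges E \<beta>. rng E e \<notin> H}" for x
    using V by (cases x) (auto simp: escaping_edges_def root_quotient_iff Q_edges)
  then show ?thesis
    by blast
qed

lemma quotient_cycle_extreme:
  assumes ar: "all_reflexive E" and c: "is_cycle Q c" "has_exit Q c"
  shows "extreme_cycle Q c"
proof -
  obtain c' where c': "c = map Inl c'" "is_cycle E c'" "cycle_verts E c' \<inter> H = {}"
    using Q_cycleD c(1) by blast
  have ext: "extreme_cycle E c'"
    using c(2) c'(1) all_reflexive_extreme_cycle[OF ar c'(2)] by (auto simp: has_exit_def Q_exit_iff)
  have "\<exists>w \<in> cycle_verts Q c. geq Q (path_rng Q p) w"
    if p: "is_path Q p" "path_src Q p \<in> cycle_verts Q c" for p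
  proof -
    obtain p' where p': "p = map Inl p'" "is_path E p'"
      using Q_pathD p(1) by blast
    have ne: "p' \<noteq> []"
      using p'(2) by auto
    then have "path_src E p' \<in> cycle_verts E c'"
      using p(2) p'(1) c'(1) by auto
    then obtain w where w: "w \<in> cycle_verts E c'" "geq E (path_rng E p') w"
      using ext p'(2) unfolding extreme_cycle_def by blast
    moreover have "w \<notin> H"
      using w(1) c'(3) by blast
    ultimately have "geq Q (Inl (path_rng E p')) (Inl w)"
      using quotient_geq_iff by blast
    then show ?thesis
      using w(1) ne p'(1) c'(1) by auto
  qed
  with c(2) show ?thesis
    unfolding extreme_cycle_def by blast
qed

lemma quotient_inf_emitter_on_cycle:
  assumes ar: "all_reflexive E" and v: "v \<in> verts Q" "inf_emitter Q v"
  shows "\<exists>c. is_cycle Q c \<and> v \<in> cycle_verts Q c"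
proof -
  obtain a where a: "v = Inl a" "a \<in> verts E" "a \<notin> H"
    using v(1) by (auto simp: Q_verts)
  have "out_edges Q v \<subseteq> Inl ` out_edges E a"
    using a(1) Q_out_edges by auto
  then have "inf_emitter E a"
    using v(2) unfolding inf_emitter_def by (meson finite_imageI finite_subset)
  then obtain c where c: "is_cycle E c" "a \<in> cycle_verts E c"
    using all_reflexive_inf_emitter_on_cycle[OF ar a(2)] by blast
  have "cycle_verts E c \<inter> H = {}"
    using cycle_verts_reachable[OF c(1) _ c(2)] a(3) hereditary_reach by blast
  with c a(1) show ?thesis
    by (intro exI[of _ "map Inl c"]) (auto simp: Q_cycle_map_iff)
qed

lemma quotient_finite_escaping_edges:
  assumes ar: "all_reflexive E" and \<alpha>: "is_inf_path Q \<alpha>"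
  shows "finite (escaping_edges Q \<alpha>)"
proof -
  obtain \<beta> where \<beta>: "\<alpha> = Inl \<circ> \<beta>" "is_inf_path E \<beta>" "\<And>i. src E (\<beta> i) \<notin> H"
    using Q_inf_pathD \<alpha> by blast
  then have "finite (Inl ` {e \<in> escaping_edges E \<beta>. rng E e \<notin> H})"
    using all_reflexive_finite_escaping_edges[OF ar] by simp
  with \<beta> show ?thesis
    by (simp add: escaping_edges_quotient)
qed

lemma all_reflexive_quotient:
  assumes "all_reflexive E"
  shows "all_reflexive Q"
  using quotient_cycle_extreme[OF assms] quotient_inf_emitter_on_cycle[OF assms]
    quotient_finite_escaping_edges[OF assms]
  unfolding all_reflexive_iff[of Q] by blast

end

text \<open>\<open>root_perpH\<close> is the reflexivity condition \<open>R(H) - H \<subseteq> R(H\<^sup>\<bottom>)\<close>.\<close>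

locale reflexive_decomposition = no_breaking_set +
  assumes root_perpH: "\<And>v. v \<in> root E H - H \<Longrightarrow> v \<in> root E (perpH E H)"
    and all_reflexive_Q: "all_reflexive (quotient_graph E H {})"
    and all_reflexive_P: "all_reflexive (porcupine_graph E H {})"
begin

lemma leaves_root:
  assumes "u \<in> root E H - H"
  obtains w where "(u, w) \<in> (edge_rel E)\<^sup>+" "w \<in> verts E" "w \<notin> root E H"
proof -
  have u: "u \<in> verts E"
    using assms by (simp add: root_def)
  obtain w where w: "w \<in> perpH E H" "(u, w) \<in> (edge_rel E)\<^sup>*"
    using root_perpH[OF assms] unfolding root_iff_rtrancl[OF u] by blast
  then have "w \<in> verts E" "w \<notin> root E H"
    by (auto simp: perpH_def)
  moreover from this have "u \<noteq> w"
    using assms by blast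
  ultimately show thesis
    using that w(2) by (simp add: rtrancl_eq_or_trancl)
qed

lemma disjoint_cycle_returns:
  assumes c: "is_cycle E c" "cycle_verts E c \<inter> H = {}"
    and e: "is_exit E c e" "rng E e \<notin> H"
    and p: "is_path E p" "path_src E p \<in> cycle_verts E c" "\<forall>f \<in> set p. rng E f \<notin> H"
  obtains z where "z \<in> cycle_verts E c" "geq E (path_rng E p) z"
proof -
  have "is_cycle Q (map Inl c)"
    using c by (simp add: Q_cycle_map_iff)
  moreover have "has_exit Q (map Inl c)"
    using has_exitI[of Q "map Inl c" "Inl e"] e by (simp add: Q_exit_iff)
  ultimately have ext: "extreme_cycle Q (map Inl c)"
    by (rule all_reflexive_extreme_cycle[OF all_reflexive_Q])
  have ne: "p \<noteq> []"
    using p(1) by auto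
  have "is_path Q (map Inl p)"
    using p by (simp add: Q_path_map_iff)
  then obtain z' where "z' \<in> cycle_verts Q (map Inl c)" "geq Q (path_rng Q (map Inl p)) z'"
    using ext p(2) ne unfolding extreme_cycle_def by (metis Q_cycle_verts Q_path_src image_eqI)
  then obtain z where z: "z \<in> cycle_verts E c" "geq Q (Inl (path_rng E p)) (Inl z)"
    using ne by auto
  moreover have "z \<notin> H"
    using z(1) c(2) by blast
  ultimately show thesis
    using that quotient_geq_iff by blast
qed

lemma closed_walk_in_root_imp_H:
  assumes closed: "(x, x) \<in> (edge_rel E)\<^sup>+" and x: "x \<in> root E H"
  shows "x \<in> H"
proof (rule ccontr)
  assume "x \<notin> H"
  obtain c where c: "is_cycle E c"
    and cx: "\<And>y. y \<in> cycle_verts E c \<Longrightarrow> (x, y) \<in> (edge_rel E)\<^sup>* \<and> (y, x) \<in> (edge_rel E)\<^sup>*"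
    using closed_walk_cycle[OF closed] by blast
  have c_root: "y \<in> root E H" if "y \<in> cycle_verts E c" for y
    using root_rtrancl_closed[OF wf_dgraph_trancl_verts[OF wf cycle_verts_closed_walk[OF c that]]]
      cx[OF that] x by blast
  have c_H: "cycle_verts E c \<inter> H = {}"
    using hereditary_reach[OF conjunct2[OF cx]] \<open>x \<notin> H\<close> by blast
  obtain u where u: "u \<in> cycle_verts E c"
    using cycle_verts_nonempty[OF c] by blast
  then have "u \<in> root E H - H"
    using c_root c_H by blast
  then obtain w where w: "(u, w) \<in> (edge_rel E)\<^sup>+" "w \<in> verts E" "w \<notin> root E H"
    by (rule leaves_root)
  then have w_H: "w \<notin> H" and w_c: "w \<notin> cycle_verts E c"
    using H_subset_root c_root by blast+
  obtain e where e: "e \<in> edges E" "src E e \<in> cycle_verts E c" "rng E e \<notin> cycle_verts E c"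
    "(rng E e, w) \<in> (edge_rel E)\<^sup>*"
    using rtrancl_exit_edge[OF trancl_into_rtrancl[OF w(1)] u w_c] by blast
  have exit: "is_exit E c e"
    using e cycle_rng_in_cycle_verts[OF c] by (auto simp: is_exit_def)
  have e_H: "rng E e \<notin> H"
    using e(4) w_H hereditary_reach by blast
  obtain p where p: "is_path E p" "path_src E p = u" "path_rng E p = w"
    using trancl_imp_path[OF w(1)] by blast
  have "\<forall>f \<in> set p. rng E f \<notin> H"
    using hereditary_reach[OF conjunct2[OF path_edge_reachable[OF p(1)]]] p(3) w_H by blast
  then obtain z where "z \<in> cycle_verts E c" "geq E w z"
    using disjoint_cycle_returns[OF c c_H exit e_H p(1)] p(2,3) u by blast
  then have "w \<in> root E H"
    using root_rtrancl_closed[OF w(2) geq_imp_rtrancl] c_root by blast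
  with w(3) show False ..
qed

lemma out_edge_avoiding_H:
  assumes "v \<notin> H" "e \<in> edges E" "src E e = v"
  obtains f where "f \<in> edges E" "src E f = v" "rng E f \<notin> H"
proof (rule ccontr)
  assume "\<not> thesis"
  then have into_H: "rng E f \<in> H" if "f \<in> edges E" "src E f = v" for f
    using that \<open>\<And>f. f \<in> edges E \<Longrightarrow> src E f = v \<Longrightarrow> rng E f \<notin> H \<Longrightarrow> thesis\<close> by blast
  have "v \<in> root E H"
    using root_rtrancl_closed[OF wf_dgraph_src[OF wf assms(2)] r_into_rtrancl[OF edge_rel_edge[OF assms(2)]]]
      into_H[OF assms(2,3)] H_subset_root assms(3) by blast
  then obtain w where w: "(v, w) \<in> (edge_rel E)\<^sup>+" "w \<notin> root E H"
    using leaves_root assms(1) by blast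
  then obtain y where y: "(v, y) \<in> edge_rel E" "(y, w) \<in> (edge_rel E)\<^sup>*"
    by (meson tranclD)
  then have "y \<in> H"
    using into_H by (auto simp: edge_rel_iff)
  with y(2) have "w \<in> H"
    by (rule hereditary_reach)
  with w(2) H_subset_root show False
    by blast
qed

lemma inf_emitter_on_cycle:
  assumes v: "v \<in> verts E" "inf_emitter E v"
  shows "\<exists>c. is_cycle E c \<and> v \<in> cycle_verts E c"
proof (cases "v \<in> H")
  case True
  then have "Inl v \<in> verts P" "inf_emitter P (Inl v)"
    using v(2) P_out_edges_Inl by (simp_all add: inf_emitter_def finite_image_iff)
  then obtain c where c: "is_cycle P c" "Inl v \<in> cycle_verts P c"
    by (rule all_reflexive_inf_emitter_on_cycle[OF all_reflexive_P])
  obtain c' where "c = map Inl c'" "is_cycle E c'" "cycle_verts E c' \<subseteq> H"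
    using c(1) by (rule P_cycleD)
  with c(2) show ?thesis
    by auto
next
  case False
  let ?A = "{e \<in> out_edges E v. rng E e \<notin> H}"
  obtain e where "e \<in> out_edges E v"
    using v(2) by (auto simp: inf_emitter_def dest!: infinite_imp_nonempty)
  with False obtain f where "f \<in> edges E" "src E f = v" "rng E f \<notin> H"
    using out_edge_avoiding_H by (auto simp: out_edges_def)
  then have "?A \<noteq> {}"
    by (auto simp: out_edges_def)
  moreover have "?A = {e \<in> out_edges E v. rng E e \<in> verts E - H}"
    using wf by (auto simp: out_edges_def wf_dgraph_def)
  ultimately have "infinite ?A"
    using no_breaking v False by (auto simp: breaking_def)
  then have "Inl v \<in> verts Q" "inf_emitter Q (Inl v)"
    using v(1) False Q_out_edges by (simp_all add: inf_emitter_def finite_image_iff)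
  then obtain c where c: "is_cycle Q c" "Inl v \<in> cycle_verts Q c"
    by (rule all_reflexive_inf_emitter_on_cycle[OF all_reflexive_Q])
  obtain c' where "c = map Inl c'" "is_cycle E c'" "cycle_verts E c' \<inter> H = {}"
    using c(1) by (rule Q_cycleD)
  with c(2) show ?thesis
    by auto
qed

lemma finite_out_edges_root:
  assumes "u \<in> root E H - H"
  shows "finite (out_edges E u)"
proof (rule ccontr)
  assume "infinite (out_edges E u)"
  then obtain c where "is_cycle E c" "u \<in> cycle_verts E c"
    using inf_emitter_on_cycle assms by (auto simp: inf_emitter_def root_def)
  then have "(u, u) \<in> (edge_rel E)\<^sup>+"
    by (rule cycle_verts_closed_walk)
  with assms show False
    using closed_walk_in_root_imp_H by blast
qed

lemma extreme_cycle_in_H: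
  assumes c: "is_cycle E c" "has_exit E c" and c_H: "cycle_verts E c \<subseteq> H"
  shows "extreme_cycle E c"
proof -
  obtain e where "is_exit E c e"
    using c(2) by (auto simp: has_exit_def)
  with c_H have "has_exit P (map Inl c)"
    using has_exitI[of P "map Inl c" "Inl e"] by (auto simp: P_exit_iff is_exit_def)
  moreover have "is_cycle P (map Inl c)"
    using c(1) c_H by (simp add: P_cycle_map_iff)
  ultimately have ext: "extreme_cycle P (map Inl c)"
    using all_reflexive_extreme_cycle[OF all_reflexive_P] by blast
  have "\<exists>w \<in> cycle_verts E c. geq E (path_rng E p) w"
    if p: "is_path E p" "path_src E p \<in> cycle_verts E c" for p
  proof -
    have ne: "p \<noteq> []"
      using p(1) by auto
    have "is_path P (map Inl p)"
      using P_path_mapI p c_H by blast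
    then obtain y' where "y' \<in> cycle_verts P (map Inl c)" "geq P (path_rng P (map Inl p)) y'"
      using ext p(2) ne unfolding extreme_cycle_def by (metis P_cycle_verts P_path_src image_eqI)
    then obtain y where "y \<in> cycle_verts E c" "geq P (Inl (path_rng E p)) (Inl y)"
      using ne by auto
    moreover have "path_rng E p \<in> H"
      using hereditary_path p c_H by blast
    ultimately show ?thesis
      using porcupine_geq_iff by blast
  qed
  with c(2) show ?thesis
    unfolding extreme_cycle_def by blast
qed

lemma extreme_cycle_disjoint_H:
  assumes c: "is_cycle E c" "has_exit E c" and c_H: "cycle_verts E c \<inter> H = {}"
  shows "extreme_cycle E c"
proof -
  have avoids_H: "y \<notin> H" if "u \<in> cycle_verts E c" "(u, y) \<in> (edge_rel E)\<^sup>*" for u y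
  proof
    assume "y \<in> H"
    have closed: "(u, u) \<in> (edge_rel E)\<^sup>+"
      using cycle_verts_closed_walk[OF c(1) that(1)] .
    then have "u \<in> root E H"
      using root_rtrancl_closed[OF wf_dgraph_trancl_verts[OF wf closed] that(2)] \<open>y \<in> H\<close> H_subset_root
      by blast
    with closed have "u \<in> H"
      by (rule closed_walk_in_root_imp_H)
    with c_H that(1) show False
      by blast
  qed
  obtain e where e: "is_exit E c e"
    using c(2) by (auto simp: has_exit_def)
  then have e_H: "rng E e \<notin> H"
    using avoids_H[OF _ r_into_rtrancl[OF edge_rel_edge]] by (auto simp: is_exit_def)
  have "\<exists>w \<in> cycle_verts E c. geq E (path_rng E p) w"
    if p: "is_path E p" "path_src E p \<in> cycle_verts E c" for p
  proof -
    have "\<forall>f \<in> set p. rng E f \<notin> H"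
      using avoids_H[OF p(2) path_src_reaches_rng[OF p(1)]] by blast
    then show ?thesis
      using disjoint_cycle_returns[OF c(1) c_H e e_H p] by blast
  qed
  with c(2) show ?thesis
    unfolding extreme_cycle_def by blast
qed

lemma root_inf_path_subset:
  assumes "\<And>i. src E (\<beta> i) \<in> root E H - H"
  shows "root E (inf_path_verts E \<beta>) \<subseteq> root E H - H"
proof
  fix x
  assume "x \<in> root E (inf_path_verts E \<beta>)"
  then obtain i where x: "x \<in> verts E" "(x, src E (\<beta> i)) \<in> (edge_rel E)\<^sup>*"
    by (auto simp: root_def inf_path_verts_def dest: geq_imp_rtrancl)
  then have "x \<in> root E H"
    using root_rtrancl_closed[OF x] assms[of i] by blast
  moreover have "x \<notin> H"
    using hereditary_reach[OF x(2)] assms by blast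
  ultimately show "x \<in> root E H - H"
    by blast
qed

lemma segment_through_escaping_edge:
  assumes \<beta>: "is_inf_path E \<beta>" and in_root: "\<And>i. src E (\<beta> i) \<in> root E H - H"
    and u: "u \<in> root E (inf_path_verts E \<beta>)"
  obtains s e where "is_path E s" "path_src E s = u" "path_rng E s \<in> inf_path_verts E \<beta>"
    "e \<in> edges E" "src E e \<in> src E ` set s" "rng E e \<notin> root E (inf_path_verts E \<beta>)" "rng E e \<notin> H"
proof -
  let ?T = "root E (inf_path_verts E \<beta>)"
  have T: "?T \<subseteq> root E H - H"
    using root_inf_path_subset in_root by blast
  then obtain w where w: "(u, w) \<in> (edge_rel E)\<^sup>+" "w \<notin> root E H"
    using leaves_root u by blast
  then have "w \<notin> ?T" "w \<notin> H"
    using T H_subset_root by blast+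
  then obtain e where e: "e \<in> edges E" "src E e \<in> ?T" "rng E e \<notin> ?T"
    "(u, src E e) \<in> (edge_rel E)\<^sup>*" "(rng E e, w) \<in> (edge_rel E)\<^sup>*"
    using rtrancl_exit_edge[OF trancl_into_rtrancl[OF w(1)] u] by blast
  have "rng E e \<notin> H"
    using hereditary_reach[OF e(5)] \<open>w \<notin> H\<close> by blast
  obtain i where "(src E e, src E (\<beta> i)) \<in> (edge_rel E)\<^sup>*"
    using e(2) by (auto simp: root_def inf_path_verts_def dest: geq_imp_rtrancl)
  then have "(src E e, src E (\<beta> (Suc i))) \<in> (edge_rel E)\<^sup>+"
    using inf_path_edge_rel[OF \<beta>] by (rule rtrancl_into_trancl1)
  then obtain s where "is_path E s" "path_src E s = u" "path_rng E s = src E (\<beta> (Suc i))"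
    "src E e \<in> src E ` set s"
    using path_through[OF e(4)] by blast
  with e \<open>rng E e \<notin> H\<close> that show thesis
    by simp
qed

lemma finite_escaping_edges_avoiding_H:
  assumes "is_inf_path E \<beta>" "\<And>i. src E (\<beta> i) \<notin> H"
  shows "finite {e \<in> escaping_edges E \<beta>. rng E e \<notin> H}"
proof -
  have "finite (escaping_edges Q (Inl \<circ> \<beta>))"
    using all_reflexive_finite_escaping_edges[OF all_reflexive_Q Q_inf_path_mapI[OF assms]] .
  then show ?thesis
    using escaping_edges_quotient[OF assms(2)] by (simp add: finite_image_iff)
qed

lemma inf_path_in_root_minus_H_distinct:
  assumes "is_inf_path E \<alpha>" "\<And>n. src E (\<alpha> n) \<in> root E H - H"
  shows "inj (\<lambda>n. src E (\<alpha> n))"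
proof (rule linorder_injI)
  fix i j :: nat
  assume "i < j"
  then have "(src E (\<alpha> i), src E (\<alpha> j)) \<in> (edge_rel E)\<^sup>+"
    by (rule inf_path_trancl[OF assms(1)])
  then show "src E (\<alpha> i) \<noteq> src E (\<alpha> j)"
    using closed_walk_in_root_imp_H assms(2) by fastforce
qed

end

context reflexive_decomposition
begin

lemma inf_path_with_escapes:
  assumes \<beta>: "is_inf_path E \<beta>" and in_root: "\<And>i. src E (\<beta> i) \<in> root E H - H"
  obtains \<alpha> where "is_inf_path E \<alpha>" "\<And>n. src E (\<alpha> n) \<in> root E (inf_path_verts E \<beta>)"
    "infinite {m. \<exists>e \<in> edges E. src E e = src E (\<alpha> m) \<and>
       rng E e \<notin> root E (inf_path_verts E \<beta>) \<and> rng E e \<notin> H}"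
proof -
  define T where "T = root E (inf_path_verts E \<beta>)"
  have \<beta>_T: "inf_path_verts E \<beta> \<subseteq> T"
    unfolding T_def using subset_root inf_path_verts_subset[OF wf \<beta>] by blast
  have "\<exists>s. is_path E s \<and> path_src E s = u \<and> path_rng E s \<in> T \<and>
      (\<exists>e \<in> edges E. src E e \<in> src E ` set s \<and> rng E e \<notin> T \<and> rng E e \<notin> H)" if "u \<in> T" for u
    using segment_through_escaping_edge[OF \<beta> in_root that[unfolded T_def]] \<beta>_T
    unfolding T_def by blast
  then obtain seg where segs: "\<And>u. u \<in> T \<Longrightarrow> is_path E (seg u) \<and> path_src E (seg u) = u \<and>
      path_rng E (seg u) \<in> T \<and> (\<exists>e \<in> edges E. src E e \<in> src E ` set (seg u) \<and> rng E e \<notin> T \<and> rng E e \<notin> H)"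
    by metis
  then interpret path_segments E T seg
    by unfold_locales blast
  have "src E (\<beta> 0) \<in> T"
    using \<beta>_T src_in_inf_path_verts by blast
  then obtain \<alpha> where \<alpha>: "is_inf_path E \<alpha>"
    and recur: "\<And>n. \<exists>m \<ge> n. \<exists>v \<in> T. src E (\<alpha> m) = v \<and> (\<forall>i < length (seg v). \<alpha> (m + i) = seg v ! i)"
    using inf_path_of_segments by blast
  have "src E (\<alpha> n) \<in> T" for n
    using recur[of n] root_rtrancl_closed[OF inf_path_src_in_verts[OF wf \<alpha>] inf_path_rtrancl[OF \<alpha>]]
    unfolding T_def by blast
  moreover have "infinite {m. \<exists>e \<in> edges E. src E e = src E (\<alpha> m) \<and> rng E e \<notin> T \<and> rng E e \<notin> H}"
    unfolding infinite_nat_iff_unbounded_le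
  proof
    fix n
    obtain m v where m: "n \<le> m" "v \<in> T" "\<forall>i < length (seg v). \<alpha> (m + i) = seg v ! i"
      using recur by blast
    then obtain e i where "e \<in> edges E" "rng E e \<notin> T" "rng E e \<notin> H"
      "i < length (seg v)" "src E e = src E (seg v ! i)"
      using segs by (fastforce simp: in_set_conv_nth)
    with m show "\<exists>k \<ge> n. k \<in> {m. \<exists>e \<in> edges E. src E e = src E (\<alpha> m) \<and> rng E e \<notin> T \<and> rng E e \<notin> H}"
      by (intro exI[of _ "m + i"]) auto
  qed
  ultimately show thesis
    using that \<alpha> unfolding T_def by blast
qed

lemma no_inf_path_in_root_minus_H:
  assumes \<beta>: "is_inf_path E \<beta>" and in_root: "\<And>i. src E (\<beta> i) \<in> root E H - H"
  shows False
proof -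
  define T where "T = root E (inf_path_verts E \<beta>)"
  have T: "T \<subseteq> root E H - H"
    unfolding T_def using root_inf_path_subset in_root by blast
  obtain \<alpha> where \<alpha>: "is_inf_path E \<alpha>" and \<alpha>_T: "\<And>n. src E (\<alpha> n) \<in> T"
    and "infinite {m. \<exists>e \<in> edges E. src E e = src E (\<alpha> m) \<and> rng E e \<notin> T \<and> rng E e \<notin> H}"
    using inf_path_with_escapes[OF \<beta> in_root] unfolding T_def by blast
  moreover define I where "I = {m. \<exists>e \<in> edges E. src E e = src E (\<alpha> m) \<and> rng E e \<notin> T \<and> rng E e \<notin> H}"
  moreover have "inj_on (\<lambda>m. src E (\<alpha> m)) I"
    using inf_path_in_root_minus_H_distinct[OF \<alpha>] \<alpha>_T T by (meson inj_on_subset subsetD subset_UNIV)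
  moreover have "root E (inf_path_verts E \<alpha>) \<subseteq> T"
  proof
    fix y
    assume "y \<in> root E (inf_path_verts E \<alpha>)"
    then obtain n where "y \<in> verts E" "(y, src E (\<alpha> n)) \<in> (edge_rel E)\<^sup>*"
      by (auto simp: root_def inf_path_verts_def dest: geq_imp_rtrancl)
    then show "y \<in> T"
      using \<alpha>_T[of n] unfolding T_def by (rule root_rtrancl_closed)
  qed
  then have "(\<lambda>m. src E (\<alpha> m)) ` I \<subseteq> src E ` {e \<in> escaping_edges E \<alpha>. rng E e \<notin> H}"
    unfolding I_def escaping_edges_def by (auto 4 3 simp: image_iff)
  moreover have "finite {e \<in> escaping_edges E \<alpha>. rng E e \<notin> H}"
    using finite_escaping_edges_avoiding_H[OF \<alpha>] \<alpha>_T T by blast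
  ultimately show False
    by (meson finite_imageD finite_imageI finite_subset)
qed

lemma finite_escaping_edges_meeting_H:
  assumes \<beta>: "is_inf_path E \<beta>" and "src E (\<beta> k) \<in> H"
  shows "finite (escaping_edges E \<beta>)"
proof -
  define N where "N = (LEAST i. src E (\<beta> i) \<in> H)"
  have N: "src E (\<beta> N) \<in> H"
    using assms(2) unfolding N_def by (rule LeastI)
  have suffix_H: "src E (\<beta> (N + i)) \<in> H" for i
    using hereditary_reach[OF inf_path_rtrancl[OF \<beta>, of N "N + i"] N] by simp
  have "is_inf_path P (Inl \<circ> (\<lambda>i. \<beta> (N + i)))"
    using P_inf_path_map_iff inf_path_suffix[OF \<beta>] suffix_H by blast
  then have "finite (escaping_edges P (Inl \<circ> (\<lambda>i. \<beta> (N + i))))"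
    by (rule all_reflexive_finite_escaping_edges[OF all_reflexive_P])
  then have "finite (escaping_edges E (\<lambda>i. \<beta> (N + i)))"
    using escaping_edges_porcupine[of "\<lambda>i. \<beta> (N + i)"] suffix_H by (simp add: finite_image_iff)
  moreover have "finite (out_edges E (src E (\<beta> j)))" if "j < N" for j
  proof (rule finite_out_edges_root)
    have "src E (\<beta> j) \<in> root E H"
      using root_rtrancl_closed[OF inf_path_src_in_verts[OF wf \<beta>] inf_path_rtrancl[OF \<beta>, of j N]]
        N H_subset_root that by auto
    moreover have "src E (\<beta> j) \<notin> H"
      using that not_less_Least unfolding N_def by blast
    ultimately show "src E (\<beta> j) \<in> root E H - H"
      by blast
  qed
  ultimately show ?thesis
    by (rule finite_escaping_edges_suffix)
qed

lemma finite_escaping_edges_outside_H: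
  assumes \<beta>: "is_inf_path E \<beta>" and outside: "\<And>i. src E (\<beta> i) \<notin> H"
  shows "finite (escaping_edges E \<beta>)"
proof -
  define I where "I = {i. src E (\<beta> i) \<in> root E H}"
  have "finite I"
  proof (rule ccontr)
    assume "infinite I"
    have "src E (\<beta> i) \<in> root E H - H" for i
    proof -
      obtain k where "i \<le> k" "k \<in> I"
        using \<open>infinite I\<close> by (auto simp: infinite_nat_iff_unbounded_le)
      then show ?thesis
        using root_rtrancl_closed[OF inf_path_src_in_verts[OF wf \<beta>] inf_path_rtrancl[OF \<beta>]] outside
        unfolding I_def by auto
    qed
    then show False
      by (rule no_inf_path_in_root_minus_H[OF \<beta>])
  qed
  have "escaping_edges E \<beta> \<subseteq> {e \<in> escaping_edges E \<beta>. rng E e \<notin> H} \<union> (\<Union>i \<in> I. out_edges E (src E (\<beta> i)))"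
  proof
    fix e
    assume e: "e \<in> escaping_edges E \<beta>"
    then obtain i where i: "e \<in> edges E" "src E e = src E (\<beta> i)"
      by (auto simp: escaping_edges_def inf_path_verts_def)
    show "e \<in> {e \<in> escaping_edges E \<beta>. rng E e \<notin> H} \<union> (\<Union>i \<in> I. out_edges E (src E (\<beta> i)))"
    proof (cases "rng E e \<in> H")
      case True
      then have "src E e \<in> root E H"
        using root_rtrancl_closed[OF wf_dgraph_src[OF wf i(1)] r_into_rtrancl[OF edge_rel_edge[OF i(1)]]]
          H_subset_root by blast
      with i show ?thesis
        by (auto simp: I_def out_edges_def)
    qed (use e in blast)
  qed
  moreover have "finite (out_edges E (src E (\<beta> i)))" if "i \<in> I" for i
    using that outside finite_out_edges_root unfolding I_def by blast
  ultimately show ?thesis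
    using finite_escaping_edges_avoiding_H[OF \<beta> outside] \<open>finite I\<close>
    by (meson finite_UN_I finite_UnI finite_subset)
qed

lemma all_reflexive_graph: "all_reflexive E"
proof -
  have "extreme_cycle E c" if "is_cycle E c" "has_exit E c" for c
    using cycle_verts_subset_or_disjoint_H[OF that(1)] extreme_cycle_in_H[OF that]
      extreme_cycle_disjoint_H[OF that] by blast
  moreover have "finite (escaping_edges E \<beta>)" if "is_inf_path E \<beta>" for \<beta>
    using finite_escaping_edges_meeting_H[OF that] finite_escaping_edges_outside_H[OF that] by blast
  ultimately show ?thesis
    using inf_emitter_on_cycle unfolding all_reflexive_iff by blast
qed

end

context no_breaking_set
begin

lemma quotient_cycle_has_exit:
  assumes ar: "all_reflexive E" and exits: "\<And>c. is_cycle E c \<Longrightarrow> has_exit E c"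
    and c: "is_cycle Q c"
  shows "has_exit Q c"
proof -
  obtain c' where c': "c = map Inl c'" "is_cycle E c'" "cycle_verts E c' \<inter> H = {}"
    using c by (rule Q_cycleD)
  obtain e where e: "is_exit E c' e"
    using exits[OF c'(2)] by (auto simp: has_exit_def)
  then obtain w where "w \<in> cycle_verts E c'" "(rng E e, w) \<in> (edge_rel E)\<^sup>*"
    using all_reflexive_cycle_out_edge_returns[OF ar c'(2)] by (auto simp: is_exit_def)
  then have "rng E e \<notin> H"
    using c'(3) hereditary_reach by blast
  with e c'(1) show ?thesis
    using has_exitI[of Q c "Inl e"] by (simp add: Q_exit_iff)
qed

lemma porcupine_cycle_has_exit:
  assumes exits: "\<And>c. is_cycle E c \<Longrightarrow> has_exit E c" and c: "is_cycle P c"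
  shows "has_exit P c"
proof -
  obtain c' where c': "c = map Inl c'" "is_cycle E c'" "cycle_verts E c' \<subseteq> H"
    using c by (rule P_cycleD)
  obtain e where e: "is_exit E c' e"
    using exits[OF c'(2)] by (auto simp: has_exit_def)
  then have "src E e \<in> H"
    using c'(3) by (auto simp: is_exit_def)
  with e c'(1) show ?thesis
    using has_exitI[of P c "Inl e"] by (simp add: P_exit_iff)
qed

lemma cycle_has_exit:
  assumes exits_Q: "\<And>c. is_cycle Q c \<Longrightarrow> has_exit Q c"
    and exits_P: "\<And>c. is_cycle P c \<Longrightarrow> has_exit P c"
    and c: "is_cycle E c"
  shows "has_exit E c"
proof -
  have "has_exit Q (map Inl c) \<or> has_exit P (map Inl c)"
    using cycle_verts_subset_or_disjoint_H[OF c] c exits_Q exits_P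
    by (auto simp: Q_cycle_map_iff P_cycle_map_iff)
  then show ?thesis
    by (auto simp: has_exit_def Q_exit_iff P_exit_iff)
qed

lemma all_reflexive_iff_quotient_porcupine:
  assumes "\<And>v. v \<in> root E H - H \<Longrightarrow> v \<in> root E (perpH E H)"
  shows "all_reflexive E \<longleftrightarrow> all_reflexive Q \<and> all_reflexive P"
proof
  assume "all_reflexive Q \<and> all_reflexive P"
  then interpret reflexive_decomposition E H
    by unfold_locales (use assms in auto)
  show "all_reflexive E"
    by (rule all_reflexive_graph)
qed (simp add: all_reflexive_quotient all_reflexive_porcupine)

lemma strongly_all_reflexive_iff_quotient_porcupine:
  assumes "\<And>v. v \<in> root E H - H \<Longrightarrow> v \<in> root E (perpH E H)"
  shows "strongly_all_reflexive E \<longleftrightarrow> strongly_all_reflexive Q \<and> strongly_all_reflexive P"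
proof -
  have "(\<forall>c. is_cycle E c \<longrightarrow> has_exit E c) \<longleftrightarrow>
      (\<forall>c. is_cycle Q c \<longrightarrow> has_exit Q c) \<and> (\<forall>c. is_cycle P c \<longrightarrow> has_exit P c)"
    if "all_reflexive E"
    using quotient_cycle_has_exit[OF that] porcupine_cycle_has_exit cycle_has_exit by blast
  with all_reflexive_iff_quotient_porcupine[OF assms] show ?thesis
    unfolding strongly_all_reflexive_def by blast
qed

end

theorem proposition3p17:
  fixes E :: "('v, 'e) dgraph" and H S :: "'v set"
  assumes "wf_dgraph E"
    and "reflexive_pair E H S"
  shows "(all_reflexive E \<longleftrightarrow>
            all_reflexive (quotient_graph E H S) \<and> all_reflexive (porcupine_graph E H S))
       \<and> (strongly_all_reflexive E \<longleftrightarrow>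
            strongly_all_reflexive (quotient_graph E H S) \<and> strongly_all_reflexive (porcupine_graph E H S))"
proof -
  have her: "hereditary E H" and S_breaking: "S = breaking E H"
    using assms reflexive_pair_S_eq_breaking by (auto simp: reflexive_pair_def admissible_def)
  interpret hereditary_set E H
    using assms(1) her by unfold_locales
  have S_empty: "S = {}" if "all_reflexive E \<or> all_reflexive (porcupine_graph E H S)"
    using that all_reflexive_breaking_empty[OF assms(1) her] porcupine_all_reflexive_S_empty[of S]
      S_breaking by blast
  show ?thesis
  proof (cases "S = {}")
    case True
    then interpret no_breaking_set E H
      using S_breaking by unfold_locales simp
    show ?thesis
      using True reflexive_pair_root_perpH[OF assms(2)]
        all_reflexive_iff_quotient_porcupine strongly_all_reflexive_iff_quotient_porcupine
      by simp
  next
    case False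
    then show ?thesis
      using S_empty by (auto simp: strongly_all_reflexive_def)
  qed
qed

end
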